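(* Consider the interval model $Y_t={\bf Z}_t'{\boldsymbol\theta}^0+u_t$, $t=1,\dots,T$, described in the context, with fixed dimension $p$. Suppose: (A1) $\{Y_t,X_{1,t},\dots,X_{J,t}\}$ are strictly stationary and ergodic interval stochastic processes with $\mathbb{E}\|Y_t\|_K^4<\infty$ and $\mathbb{E}\|X_{j,t}\|_K^4<\infty$ for $j=1,\dots,J$; the interval innovation $\{u_t\}$ satisfies $\mathbb{E}(u_t\mid\mathcal{I}_{t-1})=[0,0]$ a.s. (equivalently $\mathbb{E}(s_{u_t}(u)\mid\mathcal I_{t-1})=0$ for $u=\pm1$) and $\mathbb{E}(\|u_t\|_K^2\mid\mathcal{I}_{t-1})=\sigma^2$; (A2) the parameter space $\Theta$ is a compact subset of $\mathbb{R}^p$ and ${\boldsymbol\theta}^0$ is an interior point of $\Theta$; (A3) the matrices $\mathbb{E}[\langle s_{{\bf Z}_t},s'_{{\bf Z}_t}\rangle_K]$ and $\mathbb{E}[\langle s_{{\bf Z}_t},s_{u_t({\boldsymbol\theta})}\rangle_K\langle s_{u_t({\boldsymbol\theta})},s'_{{\bf Z}_t}\rangle_K]$, where $u_t({\boldsymbol\theta})=Y_t-{\bf Z}_t'{\boldsymbol\theta}$, are positive definite for all ${\boldsymbol\theta}$ in a small neighborhood of ${\boldsymbol\theta}^0$; (A4) $\lambda_T/\sqrt{T}\to0$ and $\lambda_T T^{(\gamma-1)/2}\to\infty$ as $T\to\infty$. Then the penalized minimum $D_K$-distance estimator $\hat{\boldsymbol\theta}_T$ satisfies $\|\hat{\boldsymbol\theta}_T-{\boldsymbol\theta}^0\|=O_p(1/\sqrt{T})$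 as $T\to\infty$, where $\|\cdot\|$ is the Euclidean norm.
   Context: Intervals: an (extended) interval is an ordered pair $A=[A_L,A_R]$ of real numbers, where $A_R<A_L$ is allowed. Operations: $A+B=[A_L+B_L,A_R+B_R]$, $A-B=[A_L-B_L,A_R-B_R]$ (Hukuhara difference), $cA=[cA_L,cA_R]$ for $c\in\mathbb{R}$. The support function of $A$ on $S^0=\{-1,1\}$ is $s_A(1)=A_R$, $s_A(-1)=-A_L$. Fix a kernel $K:\{-1,1\}^2\to\mathbb{R}$ that is symmetric positive definite: $K(1,-1)=K(-1,1)$, $K(1,1)>0$, $K(1,1)K(-1,-1)>K(1,-1)^2$. Define $\langle s_A,s_B\rangle_K=\sum_{u,v\in\{-1,1\}}K(u,v)s_A(u)s_B(v)$, $\|A\|_K^2=\langle s_A,s_A\rangle_K$ and the $D_K$-distance $D_K(A,B)=\|A-B\|_K$. For a column vector of intervals ${\bf A}=(A_1,\dots,A_p)'$ and an interval $C$, $\langle s_{\bf A},s'_{\bf A}\rangle_K$ is the $p\times p$ matrix with $(i,j)$ entry $\langle s_{A_i},s_{A_j}\rangle_K$, $\langle s_{\bf A},s_C\rangle_K$ is the $p$-vector with entries $\langle s_{A_i},s_C\rangle_K$, and $\langle s_C,s'_{\bf A}\rangle_K$ is its transpose; for ${\boldsymbol\theta}\in\mathbb{R}^p$, ${\bf A}'{\boldsymbol\theta}=\sum_j\theta_jA_j$. Model (ACIX): $Y_t$ and $X_{1,t},\dots,X_{J,t}$ are interval-valued random variables (time series) on a probability space; $I_0=[-1/2,1/2]$;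 ${\bf X}_t=(X_{1,t},\dots,X_{J,t})'$; ${\bf Z}_t=([1,1],I_0,Y_{t-1},\dots,Y_{t-q},{\bf X}_t',\dots,{\bf X}_{t-s}')'$ is a vector of $p$ intervals; $Y_t={\bf Z}_t'{\boldsymbol\theta}^0+u_t$ with true parameter ${\boldsymbol\theta}^0\in\mathbb{R}^p$ and interval innovation $u_t$; $\mathcal{I}_{t-1}$ denotes the information set at time $t-1$. Estimators: the minimum $D_K$-distance estimator $\tilde{\boldsymbol\theta}_T=(\tilde\theta_1,\dots,\tilde\theta_p)'=\arg\min_{\boldsymbol\theta}\sum_{t=1}^T\|Y_t-{\bf Z}_t'{\boldsymbol\theta}\|_K^2$, and the penalized (interval adaptive LASSO) estimator $\hat{\boldsymbol\theta}_T=\arg\min_{\boldsymbol\theta}\sum_{t=1}^T\|Y_t-{\bf Z}_t'{\boldsymbol\theta}\|_K^2+\lambda_T\sum_{j=1}^p\hat w_j|\theta_j|$ with adaptive weights $\hat w_j=1/|\tilde\theta_j|^\gamma$, tuning parameter $\lambda_T>0$ and a given constant $\gamma>0$. *)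

theory Defs
  imports "HOL-Probability.Probability"
begin

text \<open>Extended intervals A = [A_L, A_R] are represented as pairs (A_L, A_R) :: real \<times> real.
  The library operations on pairs (componentwise +, -, scaleR) are exactly the interval
  operations A+B, A-B (Hukuhara difference) and cA of the paper.\<close>

type_synonym interval = "real \<times> real"

definition supp :: "interval \<Rightarrow> real \<Rightarrow> real" where
  "supp A u = (if u = 1 then snd A else - fst A)"

definition dirs :: "real set" where
  "dirs = {-1, 1}"

definition spd_kernel :: "(real \<Rightarrow> real \<Rightarrow> real) \<Rightarrow> bool" where
  "spd_kernel K \<longleftrightarrow> K 1 (-1) = K (-1) 1 \<and> K 1 1 > 0 \<and> K 1 1 * K (-1) (-1) > (K 1 (-1))\<^sup>2"

definition ipK :: "(real \<Rightarrow> real \<Rightarrow> real) \<Rightarrow> interval \<Rightarrow> interval \<Rightarrow> real" where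
  "ipK K A B = (\<Sum>u\<in>dirs. \<Sum>v\<in>dirs. K u v * supp A u * supp B v)"

definition normK :: "(real \<Rightarrow> real \<Rightarrow> real) \<Rightarrow> interval \<Rightarrow> real" where
  "normK K A = sqrt (ipK K A A)"

definition I0 :: interval where
  "I0 = (-1/2, 1/2)"

text \<open>The k-th entry (k < p = 2 + q + J(s+1)) of the regressor vector
  Z_t = ([1,1], I_0, Y_{t-1}, ..., Y_{t-q}, X_t', ..., X_{t-s}')', where X_t = (X_{1,t},...,X_{J,t})'.
  X j t is X_{j,t} for 1 \<le> j \<le> J.\<close>
definition Zent :: "nat \<Rightarrow> nat \<Rightarrow> (int \<Rightarrow> 'a \<Rightarrow> interval) \<Rightarrow> (nat \<Rightarrow> int \<Rightarrow> 'a \<Rightarrow> interval)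
    \<Rightarrow> int \<Rightarrow> nat \<Rightarrow> 'a \<Rightarrow> interval" where
  "Zent q J Y X t k \<omega> =
     (if k = 0 then (1, 1)
      else if k = 1 then I0
      else if k < 2 + q then Y (t - int (k - 1)) \<omega>
      else X ((k - (2 + q)) mod J + 1) (t - int ((k - (2 + q)) div J)) \<omega>)"

text \<open>Z_t as a vector of p intervals, the positions being labelled by the finite type 'p
  through a bijection idx onto {0..<p}.\<close>
definition Zvec :: "('p::finite \<Rightarrow> nat) \<Rightarrow> nat \<Rightarrow> nat \<Rightarrow> (int \<Rightarrow> 'a \<Rightarrow> interval)
    \<Rightarrow> (nat \<Rightarrow> int \<Rightarrow> 'a \<Rightarrow> interval) \<Rightarrow> int \<Rightarrow> 'a \<Rightarrow> interval ^ 'p" where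
  "Zvec idx q J Y X t \<omega> = (\<chi> i. Zent q J Y X t (idx i) \<omega>)"

definition lincomb :: "interval ^ 'p::finite \<Rightarrow> real ^ 'p \<Rightarrow> interval" where
  "lincomb A \<theta> = (\<Sum>i\<in>UNIV. (\<theta> $ i) *\<^sub>R (A $ i))"

definition pos_def_mat :: "real ^ 'p ^ 'p::finite \<Rightarrow> bool" where
  "pos_def_mat A \<longleftrightarrow> (\<forall>x. x \<noteq> 0 \<longrightarrow> x \<bullet> (A *v x) > 0)"

text \<open>Information set I_t: sigma-algebra generated by Y_s (s \<le> t) and X_{j,s} (s \<le> t+1,
  1 \<le> j \<le> J); thus I_{t-1} contains Y_{t-1}, Y_{t-2}, ... and X_t, X_{t-1}, ....\<close>
definition info :: "'a measure \<Rightarrow> nat \<Rightarrow> (int \<Rightarrow> 'a \<Rightarrow> interval) \<Rightarrow> (nat \<Rightarrow> int \<Rightarrow> 'a \<Rightarrow> interval)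
    \<Rightarrow> int \<Rightarrow> 'a measure" where
  "info M J Y X t = sigma (space M)
     ({Y s -` B \<inter> space M | s B. s \<le> t \<and> B \<in> sets (borel :: interval measure)} \<union>
      {X j s -` B \<inter> space M | j s B. 1 \<le> j \<and> j \<le> J \<and> s \<le> t + 1 \<and> B \<in> sets (borel :: interval measure)})"

text \<open>Joint path of the process W_t = (Y_t, X_{1,t}, ..., X_{J,t}), indexed by (t, j).\<close>
definition joint_path :: "nat \<Rightarrow> (int \<Rightarrow> 'a \<Rightarrow> interval) \<Rightarrow> (nat \<Rightarrow> int \<Rightarrow> 'a \<Rightarrow> interval)
    \<Rightarrow> 'a \<Rightarrow> (int \<times> nat \<Rightarrow> interval)" where
  "joint_path J Y X \<omega> = (\<lambda>(t, j). if j = 0 then Y t \<omega> else if j \<le> J then X j t \<omega> else (0, 0))"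

definition path_space :: "(int \<times> nat \<Rightarrow> interval) measure" where
  "path_space = Pi\<^sub>M UNIV (\<lambda>_. borel)"

definition shift :: "(int \<times> nat \<Rightarrow> interval) \<Rightarrow> (int \<times> nat \<Rightarrow> interval)" where
  "shift f = (\<lambda>(t, j). f (t + 1, j))"

definition strictly_stationary :: "'a measure \<Rightarrow> ('a \<Rightarrow> (int \<times> nat \<Rightarrow> interval)) \<Rightarrow> bool" where
  "strictly_stationary M W \<longleftrightarrow>
     distr M path_space (\<lambda>\<omega>. shift (W \<omega>)) = distr M path_space W"

definition ergodic_proc :: "'a measure \<Rightarrow> ('a \<Rightarrow> (int \<times> nat \<Rightarrow> interval)) \<Rightarrow> bool" where
  "ergodic_proc M W \<longleftrightarrow>
     (\<forall>A \<in> sets path_space. shift -` A \<inter> space path_space = A \<longrightarrow>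
        measure M (W -` A \<inter> space M) \<in> {0, 1})"

definition bigO_p :: "'a measure \<Rightarrow> (nat \<Rightarrow> 'a \<Rightarrow> real) \<Rightarrow> (nat \<Rightarrow> real) \<Rightarrow> bool" where
  "bigO_p M Xn a \<longleftrightarrow>
     (\<forall>\<epsilon>>0. \<exists>C. \<exists>N. \<forall>n\<ge>N. measure M {\<omega> \<in> space M. \<bar>Xn n \<omega>\<bar> > C * a n} < \<epsilon>)"

definition DK_obj :: "(real \<Rightarrow> real \<Rightarrow> real) \<Rightarrow> (int \<Rightarrow> 'a \<Rightarrow> interval) \<Rightarrow> (int \<Rightarrow> 'a \<Rightarrow> interval ^ 'p::finite)
    \<Rightarrow> nat \<Rightarrow> 'a \<Rightarrow> real ^ 'p \<Rightarrow> real" where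
  "DK_obj K Y Z T \<omega> \<theta> = (\<Sum>t\<in>{1..int T}. (normK K (Y t \<omega> - lincomb (Z t \<omega>) \<theta>))\<^sup>2)"

text \<open>Adaptive weights w_j = 1/|tilde theta_j|^gamma (the coordinates with tilde theta_j = 0,
  whose weight is +infinity, are handled by restricting the domain, see adalasso_dom).\<close>
definition adalasso_obj :: "(real \<Rightarrow> real \<Rightarrow> real) \<Rightarrow> (int \<Rightarrow> 'a \<Rightarrow> interval) \<Rightarrow> (int \<Rightarrow> 'a \<Rightarrow> interval ^ 'p::finite)
    \<Rightarrow> real \<Rightarrow> real \<Rightarrow> real ^ 'p \<Rightarrow> nat \<Rightarrow> 'a \<Rightarrow> real ^ 'p \<Rightarrow> real" where
  "adalasso_obj K Y Z lam \<gamma> \<theta>tilde T \<omega> \<theta> =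
     DK_obj K Y Z T \<omega> \<theta> +
     lam * (\<Sum>j\<in>{j. \<theta>tilde $ j \<noteq> 0}. \<bar>\<theta> $ j\<bar> / \<bar>\<theta>tilde $ j\<bar> powr \<gamma>)"

definition adalasso_dom :: "(real ^ 'p::finite) set \<Rightarrow> real ^ 'p \<Rightarrow> (real ^ 'p) set" where
  "adalasso_dom \<Theta> \<theta>tilde = {\<theta> \<in> \<Theta>. \<forall>j. \<theta>tilde $ j = 0 \<longrightarrow> \<theta> $ j = 0}"

end

theory Submission
  imports Defs
begin

(* Write theta = theta0 + delta.  Since Y_t - Z_t' theta = u_t - Z_t' delta, the D_K objective is
     D_T(theta) = D_T(theta0) - 2 delta . S_T + delta' H_T delta,
   with score S_T = sum_t <s_{Z_t}, s_{u_t}>_K and Hessian H_T = sum_t <s_{Z_t}, s'_{Z_t}>_K.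
   The summands of S_T are martingale differences with stationary second moments, so
   E |S_T|^2 is proportional to T and S_T = O_p(sqrt T) by Chebyshev's inequality.  By the
   ergodic theorem H_T / T tends in probability to the positive definite E <s_{Z_0}, s'_{Z_0}>_K,
   so delta' H_T delta >= c T |delta|^2 with probability tending to one.  Comparing the objective
   at a minimiser with its value at theta0 gives |delta| <= (2 |S_T| + L) / (c T), where L bounds
   the slope of the penalty difference.  For the unpenalised estimator L = 0, hence it converges
   to theta0 and the adaptive weights of the nonzero coordinates of theta0 stay bounded; the
   coordinates where theta0 vanishes only increase the penalty, so L = O(lambda_T), and
   lambda_T = o(sqrt T) gives the rate.  The weak ergodic theorem is derived from the maximal
   ergodic inequality.  The rate does not need sigma^2, the compactness of Theta, the second
   matrix of (A3), the condition lambda_T T^((gamma-1)/2) -> infinity or the measurability of the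
   estimators; of (A2) only theta0 in Theta is used. *)

section \<open>The kernel inner product and quadratic forms\<close>

lemma sum_dirs: "(\<Sum>u\<in>dirs. f u) = f (-1) + f (1::real)"
  unfolding dirs_def by simp

lemma ipK_eq: "ipK K A B = K 1 1 * snd A * snd B - K 1 (-1) * snd A * fst B
    - K (-1) 1 * fst A * snd B + K (-1) (-1) * fst A * fst B"
  unfolding ipK_def sum_dirs supp_def by (simp add: algebra_simps)

lemma ipK_diff_left: "ipK K (A - B) C = ipK K A C - ipK K B C"
  unfolding ipK_eq by (simp add: algebra_simps)

lemma ipK_diff_right: "ipK K C (A - B) = ipK K C A - ipK K C B"
  unfolding ipK_eq by (simp add: algebra_simps)

lemma ipK_scaleR_left: "ipK K (r *\<^sub>R A) C = r * ipK K A C"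
  unfolding ipK_eq by (simp add: algebra_simps)

lemma ipK_scaleR_right: "ipK K C (r *\<^sub>R A) = r * ipK K C A"
  unfolding ipK_eq by (simp add: algebra_simps)

lemma ipK_sum_left: "ipK K (\<Sum>i\<in>S. f i) C = (\<Sum>i\<in>S. ipK K (f i) C)"
  unfolding ipK_eq fst_sum snd_sum
  by (simp add: algebra_simps sum_distrib_left sum_distrib_right sum_subtractf sum.distrib)

lemma ipK_sum_right: "ipK K C (\<Sum>i\<in>S. f i) = (\<Sum>i\<in>S. ipK K C (f i))"
  unfolding ipK_eq fst_sum snd_sum
  by (simp add: algebra_simps sum_distrib_left sum_distrib_right sum_subtractf sum.distrib)

lemma ipK_commute: "spd_kernel K \<Longrightarrow> ipK K A B = ipK K B A"
  unfolding ipK_eq spd_kernel_def by (simp add: algebra_simps)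

lemma binary_quadratic_form_ge:
  fixes a b d x y :: real
  assumes a: "a > 0" and d: "d > 0" and det: "a * d > b\<^sup>2"
  shows "(a * d - b\<^sup>2) / (a + d) * (x\<^sup>2 + y\<^sup>2) \<le> a * x\<^sup>2 - 2 * b * x * y + d * y\<^sup>2"
proof -
  define c where "c = (a * d - b\<^sup>2) / (a + d)"
  have apd: "a + d > 0" using a d by simp
  have "a - c = (a\<^sup>2 + b\<^sup>2) / (a + d)"
    unfolding c_def using apd by (simp add: field_simps power2_eq_square)
  then have ac: "a - c > 0" using apd a by (simp add: add_pos_nonneg)
  \<comment> \<open>c is chosen so that (a - c) (d - c) - b^2 = c^2 \<ge> 0\<close>
  have "c * (a + d) = a * d - b\<^sup>2" unfolding c_def using apd by simp
  then have key: "(a - c) * (d - c) - b\<^sup>2 = c\<^sup>2" by (simp add: algebra_simps power2_eq_square)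
  have "(a - c) * ((a - c) * x\<^sup>2 - 2 * b * x * y + (d - c) * y\<^sup>2)
      = ((a - c) * x - b * y)\<^sup>2 + ((a - c) * (d - c) - b\<^sup>2) * y\<^sup>2"
    by (simp add: algebra_simps power2_eq_square)
  also have "\<dots> \<ge> 0" unfolding key by simp
  finally have "(a - c) * x\<^sup>2 - 2 * b * x * y + (d - c) * y\<^sup>2 \<ge> 0"
    using ac by (simp add: zero_le_mult_iff)
  then show ?thesis unfolding c_def[symmetric] by (simp add: algebra_simps)
qed

definition kernel_coercivity :: "(real \<Rightarrow> real \<Rightarrow> real) \<Rightarrow> real" where
  "kernel_coercivity K = (K 1 1 * K (-1) (-1) - (K 1 (-1))\<^sup>2) / (K 1 1 + K (-1) (-1))"

lemma spd_kernel_diag_pos: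
  assumes "spd_kernel K"
  shows "K 1 1 > 0" "K (-1) (-1) > 0"
proof -
  have det: "K 1 1 * K (-1) (-1) > (K 1 (-1))\<^sup>2" and "K 1 1 > 0"
    using assms unfolding spd_kernel_def by auto
  moreover have "K 1 1 * K (-1) (-1) > 0" using det by (smt (verit) zero_le_power2)
  ultimately show "K 1 1 > 0" "K (-1) (-1) > 0" by (auto simp: zero_less_mult_iff)
qed

lemma kernel_coercivity_pos: "spd_kernel K \<Longrightarrow> kernel_coercivity K > 0"
  using spd_kernel_diag_pos[of K] unfolding kernel_coercivity_def spd_kernel_def
  by (intro divide_pos_pos) auto

lemma ipK_self_ge:
  assumes "spd_kernel K"
  shows "kernel_coercivity K * ((fst A)\<^sup>2 + (snd A)\<^sup>2) \<le> ipK K A A"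
proof -
  have "ipK K A A = K 1 1 * (snd A)\<^sup>2 - 2 * K 1 (-1) * snd A * fst A + K (-1) (-1) * (fst A)\<^sup>2"
    using assms unfolding ipK_eq spd_kernel_def by (simp add: algebra_simps power2_eq_square)
  also have "\<dots> \<ge> kernel_coercivity K * ((snd A)\<^sup>2 + (fst A)\<^sup>2)"
    unfolding kernel_coercivity_def using assms spd_kernel_diag_pos[OF assms]
    by (intro binary_quadratic_form_ge) (auto simp: spd_kernel_def)
  finally show ?thesis by (simp add: add.commute)
qed

lemma ipK_self_nonneg:
  assumes "spd_kernel K"
  shows "0 \<le> ipK K A A"
proof -
  have "0 \<le> kernel_coercivity K * ((fst A)\<^sup>2 + (snd A)\<^sup>2)"
    using kernel_coercivity_pos[OF assms] by simp
  then show ?thesis using ipK_self_ge[OF assms, of A] by linarith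
qed

lemma normK_power2: "spd_kernel K \<Longrightarrow> (normK K A)\<^sup>2 = ipK K A A"
  unfolding normK_def using ipK_self_nonneg by simp

definition kernel_bound :: "(real \<Rightarrow> real \<Rightarrow> real) \<Rightarrow> real" where
  "kernel_bound K = \<bar>K 1 1\<bar> + \<bar>K 1 (-1)\<bar> + \<bar>K (-1) 1\<bar> + \<bar>K (-1) (-1)\<bar>"

definition l1_norm :: "interval \<Rightarrow> real" where
  "l1_norm A = \<bar>fst A\<bar> + \<bar>snd A\<bar>"

lemma l1_norm_nonneg: "0 \<le> l1_norm A"
  unfolding l1_norm_def by simp

lemma abs_ipK_le: "\<bar>ipK K A B\<bar> \<le> kernel_bound K * l1_norm A * l1_norm B"
proof -
  have summand: "\<bar>k * x * y\<bar> \<le> \<bar>k\<bar> * (l1_norm A * l1_norm B)"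
    if "\<bar>x\<bar> \<le> l1_norm A" "\<bar>y\<bar> \<le> l1_norm B" for k x y
    unfolding abs_mult mult.assoc using that by (intro mult_left_mono mult_mono) auto
  have "\<bar>ipK K A B\<bar> \<le> \<bar>K 1 1 * snd A * snd B\<bar> + \<bar>K 1 (-1) * snd A * fst B\<bar>
      + \<bar>K (-1) 1 * fst A * snd B\<bar> + \<bar>K (-1) (-1) * fst A * fst B\<bar>"
    unfolding ipK_eq by linarith
  also have "\<dots> \<le> kernel_bound K * (l1_norm A * l1_norm B)"
    unfolding kernel_bound_def distrib_right by (intro add_mono summand) (auto simp: l1_norm_def)
  finally show ?thesis by (simp add: mult.assoc)
qed

definition qform :: "('p::finite \<Rightarrow> 'p \<Rightarrow> real) \<Rightarrow> real ^ 'p \<Rightarrow> real" where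
  "qform A x = (\<Sum>i\<in>UNIV. \<Sum>j\<in>UNIV. x $ i * x $ j * A i j)"

lemma qform_sum: "qform (\<lambda>i j. \<Sum>t\<in>S. A t i j) x = (\<Sum>t\<in>S. qform (A t) x)"
  unfolding qform_def sum_distrib_left by (subst sum.swap, rule sum.cong[OF refl], subst sum.swap) simp

lemma qform_scale: "qform (\<lambda>i j. c * A i j) x = c * qform A x"
  unfolding qform_def sum_distrib_left by (simp add: algebra_simps)

lemma qform_matrix: "qform (\<lambda>i j. A $ i $ j) x = x \<bullet> (A *v x)"
  unfolding qform_def by (simp add: inner_vec_def matrix_vector_mult_def sum_distrib_left algebra_simps)

lemma pos_def_mat_coercive:
  fixes A :: "real ^ 'p ^ 'p::finite"
  assumes pd: "pos_def_mat A"
  obtains c where "c > 0" "\<And>x. c * (norm x)\<^sup>2 \<le> qform (\<lambda>i j. A $ i $ j) x"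
proof -
  let ?f = "\<lambda>x::real^'p. x \<bullet> (A *v x)"
  have cont: "continuous_on (sphere 0 1) ?f"
    by (intro continuous_intros linear_continuous_on matrix_vector_mul_linear)
  obtain y where y: "y \<in> sphere 0 1" "\<And>z. z \<in> sphere 0 1 \<Longrightarrow> ?f y \<le> ?f z"
    using continuous_attains_inf[OF compact_sphere _ cont] by fastforce
  have "y \<noteq> 0" using y(1) by auto
  then have "?f y > 0" using pd unfolding pos_def_mat_def by blast
  moreover have "?f y * (norm x)\<^sup>2 \<le> ?f x" for x
  proof (cases "x = 0")
    case False
    define z where "z = (1 / norm x) *\<^sub>R x"
    have "z \<in> sphere 0 1" and xz: "x = norm x *\<^sub>R z" unfolding z_def using False by auto
    then have "?f y \<le> ?f z" using y(2) by blast
    moreover have "?f x = (norm x)\<^sup>2 * ?f z"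
      by (subst (1 2) xz) (simp add: matrix_vector_mult_scaleR algebra_simps power2_eq_square)
    ultimately show ?thesis by (simp add: mult_right_mono mult.commute)
  qed simp
  ultimately show ?thesis using that unfolding qform_matrix by blast
qed

lemma qform_perturb:
  fixes A H :: "'p::finite \<Rightarrow> 'p \<Rightarrow> real"
  assumes coercive: "c * (norm x)\<^sup>2 \<le> qform A x"
    and close: "\<And>i j. \<bar>H i j - A i j\<bar> \<le> \<eta>"
  shows "(c - real CARD('p)^2 * \<eta>) * (norm x)\<^sup>2 \<le> qform H x"
proof -
  have entry: "\<bar>x $ i * x $ j * H i j - x $ i * x $ j * A i j\<bar> \<le> \<eta> * (norm x)\<^sup>2" for i j
  proof -
    have "\<bar>x $ i * x $ j * H i j - x $ i * x $ j * A i j\<bar> = \<bar>x $ i\<bar> * \<bar>x $ j\<bar> * \<bar>H i j - A i j\<bar>"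
      by (simp add: abs_mult right_diff_distrib[symmetric])
    also have "\<dots> \<le> norm x * norm x * \<eta>"
      by (intro mult_mono close component_le_norm_cart) auto
    finally show ?thesis by (simp add: power2_eq_square algebra_simps)
  qed
  have "\<bar>qform H x - qform A x\<bar> \<le> (\<Sum>i\<in>(UNIV::'p set). \<Sum>j\<in>(UNIV::'p set). \<eta> * (norm x)\<^sup>2)"
    unfolding qform_def sum_subtractf[symmetric]
    by (rule order_trans[OF sum_abs sum_mono], rule order_trans[OF sum_abs sum_mono], rule entry)
  also have "\<dots> = real CARD('p)^2 * \<eta> * (norm x)\<^sup>2" by (simp add: power2_eq_square)
  finally show ?thesis using coercive by (simp add: algebra_simps)
qed

lemma lincomb_add_right: "lincomb A (\<theta> + \<delta>) = lincomb A \<theta> + lincomb A \<delta>"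
  unfolding lincomb_def by (simp add: scaleR_add_left sum.distrib)

lemma ipK_lincomb_left: "ipK K (lincomb A \<delta>) C = (\<Sum>i\<in>UNIV. \<delta> $ i * ipK K (A $ i) C)"
  unfolding lincomb_def ipK_sum_left ipK_scaleR_left ..

lemma ipK_lincomb_lincomb: "ipK K (lincomb A \<delta>) (lincomb A \<delta>) = qform (\<lambda>i j. ipK K (A $ i) (A $ j)) \<delta>"
  unfolding lincomb_def ipK_sum_left ipK_scaleR_left ipK_sum_right ipK_scaleR_right qform_def
  by (simp add: sum_distrib_left algebra_simps) (subst sum.swap, simp add: algebra_simps)

lemma minimiser_dist_le:
  fixes D :: "real ^ 'p::finite \<Rightarrow> real"
  assumes expand: "D \<theta> = D \<theta>0 - 2 * ((\<theta> - \<theta>0) \<bullet> S) + qform H (\<theta> - \<theta>0)"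
    and coercive: "a * (norm (\<theta> - \<theta>0))\<^sup>2 \<le> qform H (\<theta> - \<theta>0)" and a: "a > 0"
    and le: "D \<theta> + P \<le> D \<theta>0 + P0"
    and pen: "- L * norm (\<theta> - \<theta>0) \<le> P - P0" and L: "L \<ge> 0"
  shows "norm (\<theta> - \<theta>0) \<le> (2 * norm S + L) / a"
proof -
  let ?n = "norm (\<theta> - \<theta>0)"
  have "(\<theta> - \<theta>0) \<bullet> S \<le> norm S * ?n"
    using norm_cauchy_schwarz[of "\<theta> - \<theta>0" S] by (simp add: mult.commute)
  then have "a * ?n\<^sup>2 \<le> (2 * norm S + L) * ?n"
    using expand coercive le pen by (simp add: algebra_simps)
  then have "a * ?n \<le> 2 * norm S + L"
    using L by (cases "?n = 0") (auto simp: power2_eq_square)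
  then show ?thesis using a by (simp add: field_simps)
qed

section \<open>A weak ergodic theorem\<close>

locale ergodic_map = prob_space N for N :: "'b measure" +
  fixes T :: "'b \<Rightarrow> 'b"
  assumes T_meas[measurable]: "T \<in> measurable N N"
    and T_preserving: "distr N N T = N"
    and T_ergodic: "\<And>A. A \<in> sets N \<Longrightarrow> T -` A \<inter> space N = A \<Longrightarrow> measure N A = 0 \<or> measure N A = 1"
begin

lemma funpow_T_meas[measurable]: "(T ^^ k) \<in> measurable N N"
  by (induction k) (auto intro: measurable_comp)

lemma distr_funpow_T: "distr N N (T ^^ k) = N"
proof (induction k)
  case 0 then show ?case by (simp add: distr_id2)
next
  case (Suc k)
  have "distr N N (T ^^ Suc k) = distr N N (T ^^ k \<circ> T)"
    by (simp add: funpow_Suc_right del: funpow.simps)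
  also have "\<dots> = distr (distr N N T) N (T ^^ k)" by (rule distr_distr[symmetric]) auto
  also have "\<dots> = N" using T_preserving Suc by simp
  finally show ?case .
qed

lemma integrable_comp_funpow_T:
  fixes g :: "'b \<Rightarrow> real"
  shows "integrable N g \<Longrightarrow> integrable N (\<lambda>x. g ((T ^^ k) x))"
  using integrable_distr_eq[of "T ^^ k" N N g] by (simp add: distr_funpow_T)

lemma integral_comp_funpow_T:
  fixes g :: "'b \<Rightarrow> real"
  shows "g \<in> borel_measurable N \<Longrightarrow> integral\<^sup>L N (\<lambda>x. g ((T ^^ k) x)) = integral\<^sup>L N g"
  using integral_distr[of "T ^^ k" N N g] by (simp add: distr_funpow_T)

definition birkhoff_sum :: "('b \<Rightarrow> real) \<Rightarrow> nat \<Rightarrow> 'b \<Rightarrow> real" where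
  "birkhoff_sum f n x = (\<Sum>k<n. f ((T ^^ k) x))"

lemma birkhoff_sum_0[simp]: "birkhoff_sum f 0 x = 0"
  by (simp add: birkhoff_sum_def)

lemma birkhoff_sum_Suc: "birkhoff_sum f (Suc n) x = f x + birkhoff_sum f n (T x)"
  unfolding birkhoff_sum_def sum.lessThan_Suc_shift
  by (simp add: funpow_Suc_right del: funpow.simps)

lemma birkhoff_sum_meas[measurable]:
  "f \<in> borel_measurable N \<Longrightarrow> birkhoff_sum f n \<in> borel_measurable N"
  unfolding birkhoff_sum_def
  using measurable_comp[OF funpow_T_meas, of f borel] by (simp add: comp_def)

lemma integrable_birkhoff_sum: "integrable N f \<Longrightarrow> integrable N (birkhoff_sum f n)"
  unfolding birkhoff_sum_def by (auto intro: integrable_comp_funpow_T)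

fun birkhoff_max :: "('b \<Rightarrow> real) \<Rightarrow> nat \<Rightarrow> 'b \<Rightarrow> real" where
  "birkhoff_max f 0 x = 0"
| "birkhoff_max f (Suc n) x = max (birkhoff_max f n x) (birkhoff_sum f (Suc n) x)"

lemma birkhoff_max_nonneg: "0 \<le> birkhoff_max f n x"
  by (induction n) auto

lemma birkhoff_sum_le_max: "k \<le> n \<Longrightarrow> birkhoff_sum f k x \<le> birkhoff_max f n x"
  by (induction n) (auto simp: le_Suc_eq)

lemma birkhoff_max_attained: "\<exists>k\<le>n. birkhoff_max f n x = birkhoff_sum f k x"
proof (induction n)
  case (Suc n)
  then obtain k where "k \<le> n" "birkhoff_max f n x = birkhoff_sum f k x" by auto
  then show ?case by (auto simp: max_def intro: exI[of _ "Suc n"] exI[of _ k])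
qed simp

lemma birkhoff_max_mono: "m \<le> n \<Longrightarrow> birkhoff_max f m x \<le> birkhoff_max f n x"
  by (induction n) (auto simp: le_Suc_eq)

lemma birkhoff_max_fun:
  "birkhoff_max f 0 = (\<lambda>_. 0)"
  "birkhoff_max f (Suc n) = (\<lambda>x. max (birkhoff_max f n x) (birkhoff_sum f (Suc n) x))"
  by auto

lemma birkhoff_max_meas[measurable]:
  "f \<in> borel_measurable N \<Longrightarrow> birkhoff_max f n \<in> borel_measurable N"
  by (induction n) (simp_all add: birkhoff_max_fun)

lemma integrable_birkhoff_max: "integrable N f \<Longrightarrow> integrable N (birkhoff_max f n)"
  by (induction n) (simp_all add: birkhoff_max_fun integrable_birkhoff_sum)

lemma birkhoff_max_diff_le:
  "birkhoff_max f n x - birkhoff_max f n (T x) \<le> indicator {x. birkhoff_max f n x > 0} x * f x"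
proof (cases "birkhoff_max f n x > 0")
  case True
  obtain k where k: "k \<le> n" "birkhoff_max f n x = birkhoff_sum f k x"
    using birkhoff_max_attained by blast
  with True obtain k' where k': "k = Suc k'" by (cases k) auto
  have "birkhoff_sum f k' (T x) \<le> birkhoff_max f n (T x)"
    using k k' by (intro birkhoff_sum_le_max) auto
  then show ?thesis using True k k' birkhoff_sum_Suc by simp
next
  case False
  then show ?thesis using birkhoff_max_nonneg[of f n x] birkhoff_max_nonneg[of f n "T x"] by simp
qed

theorem maximal_ergodic_inequality:
  assumes f: "integrable N f"
  shows "0 \<le> integral\<^sup>L N (\<lambda>x. indicator {x \<in> space N. birkhoff_max f n x > 0} x * f x)"
proof -
  let ?M = "birkhoff_max f n"
  have [measurable]: "f \<in> borel_measurable N" using f by auto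
  have "{x \<in> space N. ?M x > 0} \<in> sets N" by measurable
  then have int_ind: "integrable N (\<lambda>x. indicator {x \<in> space N. ?M x > 0} x * f x)"
    using integrable_mult_indicator[OF _ f] by simp
  have int_M: "integrable N ?M" "integrable N (\<lambda>x. ?M (T x))"
    using integrable_birkhoff_max[OF f] integrable_comp_funpow_T[of ?M 1] by simp_all
  have "integral\<^sup>L N (\<lambda>x. ?M x - ?M (T x)) = 0"
    using int_M integral_comp_funpow_T[of ?M 1] by simp
  moreover have "integral\<^sup>L N (\<lambda>x. ?M x - ?M (T x))
      \<le> integral\<^sup>L N (\<lambda>x. indicator {x \<in> space N. ?M x > 0} x * f x)"
  proof (rule integral_mono[OF Bochner_Integration.integrable_diff[OF int_M] int_ind])
    fix x assume "x \<in> space N"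
    then show "?M x - ?M (T x) \<le> indicator {x \<in> space N. ?M x > 0} x * f x"
      using birkhoff_max_diff_le[of f n x] by (simp add: indicator_def)
  qed
  ultimately show ?thesis by simp
qed

definition unbounded_sums :: "('b \<Rightarrow> real) \<Rightarrow> 'b set" where
  "unbounded_sums g = {x \<in> space N. \<forall>C::nat. \<exists>n. birkhoff_sum g n x > real C}"

lemma unbounded_sums_sets[measurable]:
  "g \<in> borel_measurable N \<Longrightarrow> unbounded_sums g \<in> sets N"
  unfolding unbounded_sums_def by measurable

lemma unbounded_nat_iff_real:
  "(\<forall>C::nat. \<exists>n. s n > real C) \<longleftrightarrow> (\<forall>C::real. \<exists>n. s n > C)"
proof
  assume h: "\<forall>C::nat. \<exists>n. s n > real C"
  show "\<forall>C::real. \<exists>n. s n > C"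
  proof
    fix C :: real
    obtain n where "s n > real (nat \<lceil>C\<rceil>)" using h by blast
    then have "s n > C" using real_nat_ceiling_ge[of C] by linarith
    then show "\<exists>n. s n > C" ..
  qed
qed auto

lemma unbounded_sums_invariant: "T -` unbounded_sums g \<inter> space N = unbounded_sums g"
proof -
  have "(\<forall>C. \<exists>n. birkhoff_sum g n (T x) > C) \<longleftrightarrow> (\<forall>C. \<exists>n. birkhoff_sum g n x > C)" for x
  proof
    assume u: "\<forall>C. \<exists>n. birkhoff_sum g n (T x) > C"
    show "\<forall>C. \<exists>n. birkhoff_sum g n x > C"
    proof
      fix C
      obtain n where "birkhoff_sum g n (T x) > C - g x" using u by blast
      then have "birkhoff_sum g (Suc n) x > C" by (simp add: birkhoff_sum_Suc)
      then show "\<exists>n. birkhoff_sum g n x > C" ..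
    qed
  next
    assume u: "\<forall>C. \<exists>n. birkhoff_sum g n x > C"
    show "\<forall>C. \<exists>n. birkhoff_sum g n (T x) > C"
    proof
      fix C
      obtain n where n: "birkhoff_sum g n x > max C 0 + \<bar>g x\<bar>" using u by blast
      then obtain m where "n = Suc m" by (cases n) auto
      then have "birkhoff_sum g m (T x) > C" using n by (simp add: birkhoff_sum_Suc)
      then show "\<exists>n. birkhoff_sum g n (T x) > C" ..
    qed
  qed
  then show ?thesis
    using measurable_space[OF T_meas] unfolding unbounded_sums_def unbounded_nat_iff_real by auto
qed

lemma integral_nonneg_if_unbounded_sums_ae:
  assumes g: "integrable N g" and full: "measure N (unbounded_sums g) = 1"
  shows "0 \<le> integral\<^sup>L N g"
proof -
  have [measurable]: "g \<in> borel_measurable N" using g by auto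
  define A where "A = {x \<in> space N. \<exists>n. birkhoff_max g n x > 0}"
  define B where "B n = {x \<in> space N. birkhoff_max g n x > 0}" for n
  have [measurable]: "A \<in> sets N" "B n \<in> sets N" for n unfolding A_def B_def by measurable
  have lim: "(\<lambda>n. indicator (B n) x * g x) \<longlonglongrightarrow> indicator A x * g x" for x
  proof (cases "x \<in> A")
    case True
    then obtain n0 where n0: "birkhoff_max g n0 x > 0" and x: "x \<in> space N" unfolding A_def by auto
    have "\<forall>n\<ge>n0. x \<in> B n"
      using x less_le_trans[OF n0 birkhoff_max_mono] unfolding B_def by blast
    then have "\<forall>n\<ge>n0. indicator (B n) x * g x = indicator A x * g x"
      using True by simp
    then show ?thesis by (intro tendsto_eventually) (auto simp: eventually_sequentially)
  next
    case False
    then have "x \<notin> B n" for n unfolding A_def B_def by auto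
    then show ?thesis using False by simp
  qed
  have "(\<lambda>n. integral\<^sup>L N (\<lambda>x. indicator (B n) x * g x)) \<longlonglongrightarrow> integral\<^sup>L N (\<lambda>x. indicator A x * g x)"
    by (rule integral_dominated_convergence[where w="\<lambda>x. norm (g x)"])
       (use g lim in \<open>auto simp: indicator_def\<close>)
  then have "0 \<le> integral\<^sup>L N (\<lambda>x. indicator A x * g x)"
    by (rule LIMSEQ_le_const) (use maximal_ergodic_inequality[OF g] in \<open>auto simp: B_def\<close>)
  moreover have "AE x in N. x \<in> unbounded_sums g"
    using prob_eq_1[OF unbounded_sums_sets] full by auto
  then have "AE x in N. indicator A x * g x = g x"
  proof (rule AE_mp, intro AE_I2 impI)
    fix x assume "x \<in> unbounded_sums g"
    then obtain n where "x \<in> space N" "birkhoff_sum g n x > real 0"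
      unfolding unbounded_sums_def by blast
    moreover from this have "birkhoff_max g n x > 0"
      using birkhoff_sum_le_max[of n n g x] by simp
    ultimately have "x \<in> A" unfolding A_def by blast
    then show "indicator A x * g x = g x" by simp
  qed
  then have "integral\<^sup>L N (\<lambda>x. indicator A x * g x) = integral\<^sup>L N g"
    by (intro integral_cong_AE) auto
  ultimately show ?thesis by simp
qed

lemma unbounded_sums_null:
  assumes g: "integrable N g" and neg: "integral\<^sup>L N g < 0"
  shows "measure N (unbounded_sums g) = 0"
proof -
  have "g \<in> borel_measurable N" using g by auto
  then show ?thesis
    using T_ergodic[OF unbounded_sums_sets unbounded_sums_invariant]
      integral_nonneg_if_unbounded_sums_ae[OF g] neg by fastforce
qed

lemma birkhoff_sum_upper_deviation_tendsto:
  assumes f: "integrable N f" and \<eta>: "\<eta> > 0"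
  shows "(\<lambda>n. measure N {x \<in> space N. real n * (integral\<^sup>L N f + \<eta>) \<le> birkhoff_sum f n x}) \<longlonglongrightarrow> 0"
proof -
  have [measurable]: "f \<in> borel_measurable N" using f by auto
  define a where "a = integral\<^sup>L N f + \<eta> / 2"
  define g where "g x = f x - a" for x
  have g: "integrable N g" and gm[measurable]: "g \<in> borel_measurable N"
    unfolding g_def using f by auto
  have "integral\<^sup>L N g < 0" unfolding g_def a_def using f \<eta> by (simp add: prob_space)
  then have null: "measure N (unbounded_sums g) = 0" by (rule unbounded_sums_null[OF g])
  have sum_g: "birkhoff_sum f n x = birkhoff_sum g n x + real n * a" for n x
    unfolding birkhoff_sum_def g_def by (simp add: sum_subtractf)
  define D where "D m = {x \<in> space N. \<exists>n\<ge>m. real n * (integral\<^sup>L N f + \<eta>) \<le> birkhoff_sum f n x}" for m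
  have "D m \<in> sets N" for m unfolding D_def by measurable
  then have D_sets: "range D \<subseteq> sets N" by auto
  have "decseq D" unfolding decseq_def D_def by (auto 4 3 intro: order.trans)
  have "(\<Inter>m. D m) \<subseteq> unbounded_sums g"
  proof
    fix x assume x: "x \<in> (\<Inter>m. D m)"
    have "\<exists>n. birkhoff_sum g n x > real C" for C
    proof -
      obtain n where n: "n \<ge> nat \<lceil>2 * (real C + 1) / \<eta>\<rceil>"
          "real n * (integral\<^sup>L N f + \<eta>) \<le> birkhoff_sum f n x"
        using x unfolding D_def by blast
      then have "2 * (real C + 1) \<le> real n * \<eta>" using \<eta> by (simp add: field_simps)
      then have "real C < birkhoff_sum g n x"
        using n(2) sum_g[of n x] unfolding a_def by (auto simp: algebra_simps)
      then show ?thesis ..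
    qed
    then show "x \<in> unbounded_sums g" using x unfolding D_def unbounded_sums_def by auto
  qed
  then have "measure N (\<Inter>m. D m) \<le> 0"
    using finite_measure_mono[OF _ unbounded_sums_sets[OF gm]] null by simp
  then have "measure N (\<Inter>m. D m) = 0" using measure_nonneg[of N "\<Inter>m. D m"] by linarith
  then have lim_D: "(\<lambda>m. measure N (D m)) \<longlonglongrightarrow> 0"
    using finite_Lim_measure_decseq[OF D_sets \<open>decseq D\<close>] by simp
  have le_D: "measure N {x \<in> space N. real n * (integral\<^sup>L N f + \<eta>) \<le> birkhoff_sum f n x}
      \<le> measure N (D n)" for n
    using D_sets by (intro finite_measure_mono) (auto simp: D_def)
  show ?thesis
    by (rule tendsto_sandwich[OF eventuallyI eventuallyI tendsto_const lim_D]) (simp_all add: le_D)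
qed

theorem ergodic_weak_law:
  assumes f: "integrable N f" and \<eta>: "\<eta> > 0"
  shows "(\<lambda>n. measure N {x \<in> space N. real n * \<eta> \<le> \<bar>birkhoff_sum f n x - real n * integral\<^sup>L N f\<bar>}) \<longlonglongrightarrow> 0"
proof -
  have [measurable]: "f \<in> borel_measurable N" using f by auto
  let ?A = "\<lambda>n. {x \<in> space N. real n * (integral\<^sup>L N f + \<eta>) \<le> birkhoff_sum f n x}"
  let ?B = "\<lambda>n. {x \<in> space N. real n * (integral\<^sup>L N (\<lambda>x. - f x) + \<eta>) \<le> birkhoff_sum (\<lambda>x. - f x) n x}"
  have sets: "?A n \<in> sets N" "?B n \<in> sets N" for n by measurable
  have neg: "birkhoff_sum (\<lambda>x. - f x) n x = - birkhoff_sum f n x" for n x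
    unfolding birkhoff_sum_def by (simp add: sum_negf)
  have "{x \<in> space N. real n * \<eta> \<le> \<bar>birkhoff_sum f n x - real n * integral\<^sup>L N f\<bar>} \<subseteq> ?A n \<union> ?B n" for n
  proof
    fix x assume x: "x \<in> {x \<in> space N. real n * \<eta> \<le> \<bar>birkhoff_sum f n x - real n * integral\<^sup>L N f\<bar>}"
    show "x \<in> ?A n \<union> ?B n"
    proof (cases "0 \<le> birkhoff_sum f n x - real n * integral\<^sup>L N f")
      case True
      then show ?thesis using x by (simp add: distrib_left)
    next
      case False
      then have "real n * \<eta> \<le> real n * integral\<^sup>L N f - birkhoff_sum f n x" using x by simp
      then have "real n * (- integral\<^sup>L N f + \<eta>) \<le> - birkhoff_sum f n x"
        unfolding distrib_left by linarith
      then show ?thesis using x by (simp add: neg)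
    qed
  qed
  then have le_AB: "measure N {x \<in> space N. real n * \<eta> \<le> \<bar>birkhoff_sum f n x - real n * integral\<^sup>L N f\<bar>}
      \<le> measure N (?A n) + measure N (?B n)" for n
    by (rule order_trans[OF finite_measure_mono measure_Un_le]) (simp_all add: sets)
  have "(\<lambda>n. measure N (?A n) + measure N (?B n)) \<longlonglongrightarrow> 0 + 0"
    by (rule tendsto_add[OF birkhoff_sum_upper_deviation_tendsto[OF f \<eta>]
          birkhoff_sum_upper_deviation_tendsto[OF _ \<eta>]]) (simp add: f)
  then have lim_AB: "(\<lambda>n. measure N (?A n) + measure N (?B n)) \<longlonglongrightarrow> 0" by simp
  show ?thesis
    by (rule tendsto_sandwich[OF eventuallyI eventuallyI tendsto_const lim_AB]) (rule measure_nonneg, rule le_AB)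
qed

end

section \<open>Fourth moments\<close>

definition L4 :: "'a measure \<Rightarrow> ('a \<Rightarrow> real) \<Rightarrow> bool" where
  "L4 M f \<longleftrightarrow> f \<in> borel_measurable M \<and> integrable M (\<lambda>x. (f x) ^ 4)"

lemma abs_mult_le_sum_squares: "\<bar>x * y\<bar> \<le> x\<^sup>2 + (y::real)\<^sup>2"
proof -
  have "2 * \<bar>x\<bar> * \<bar>y\<bar> \<le> \<bar>x\<bar>\<^sup>2 + \<bar>y\<bar>\<^sup>2" by (rule sum_squares_bound)
  moreover have "0 \<le> \<bar>x\<bar> * \<bar>y\<bar>" by simp
  ultimately show ?thesis unfolding abs_mult power2_abs by linarith
qed

lemma power2_power2: "((x::real)\<^sup>2)\<^sup>2 = x ^ 4"
  by (simp add: power4_eq_xxxx power2_eq_square)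

lemma power4_add_le: "(a + b) ^ 4 \<le> 8 * (a ^ 4 + (b::real) ^ 4)"
proof -
  have "(a + b)\<^sup>2 \<le> 2 * (a\<^sup>2 + b\<^sup>2)"
    using sum_squares_bound[of a b] unfolding power2_sum by (smt (verit))
  then have "((a + b)\<^sup>2)\<^sup>2 \<le> (2 * (a\<^sup>2 + b\<^sup>2))\<^sup>2"
    by (rule power_mono) simp
  moreover have "(a\<^sup>2 + b\<^sup>2)\<^sup>2 \<le> 2 * ((a\<^sup>2)\<^sup>2 + (b\<^sup>2)\<^sup>2)"
    using sum_squares_bound[of "a\<^sup>2" "b\<^sup>2"] unfolding power2_sum by (smt (verit))
  ultimately show ?thesis unfolding power2_power2 power_mult_distrib by simp
qed

lemma abs_prod4_le: "\<bar>a * b * c * d\<bar> \<le> a ^ 4 + b ^ 4 + c ^ 4 + (d::real) ^ 4"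
proof -
  have "\<bar>(a * b) * (c * d)\<bar> \<le> (a * b)\<^sup>2 + (c * d)\<^sup>2" by (rule abs_mult_le_sum_squares)
  moreover have "2 * (a\<^sup>2 * b\<^sup>2) \<le> (a\<^sup>2)\<^sup>2 + (b\<^sup>2)\<^sup>2" "2 * (c\<^sup>2 * d\<^sup>2) \<le> (c\<^sup>2)\<^sup>2 + (d\<^sup>2)\<^sup>2"
    using sum_squares_bound[of "a\<^sup>2" "b\<^sup>2"] sum_squares_bound[of "c\<^sup>2" "d\<^sup>2"] by (simp_all add: mult.assoc)
  ultimately show ?thesis unfolding power2_power2 power_mult_distrib mult.assoc by linarith
qed

context prob_space
begin

lemma L4_const[simp, intro]: "L4 M (\<lambda>_. c)"
  unfolding L4_def by auto

lemma L4_add[intro]: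
  assumes "L4 M f" "L4 M g"
  shows "L4 M (\<lambda>x. f x + g x)"
proof -
  have [measurable]: "f \<in> borel_measurable M" "g \<in> borel_measurable M"
    using assms unfolding L4_def by auto
  have "integrable M (\<lambda>x. 8 * ((f x) ^ 4 + (g x) ^ 4))" using assms unfolding L4_def by auto
  then have "integrable M (\<lambda>x. (f x + g x) ^ 4)"
    by (rule Bochner_Integration.integrable_bound)
       (use power4_add_le in \<open>auto simp: zero_le_even_power\<close>)
  then show ?thesis unfolding L4_def by simp
qed

lemma L4_cmult[intro]: "L4 M f \<Longrightarrow> L4 M (\<lambda>x. c * f x)"
  unfolding L4_def by (auto simp: power_mult_distrib)

lemma L4_diff[intro]: "L4 M f \<Longrightarrow> L4 M g \<Longrightarrow> L4 M (\<lambda>x. f x - g x)"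
  using L4_add[of f "\<lambda>x. (-1) * g x"] L4_cmult[of g "-1"] by simp

lemma L4_abs[intro]: "L4 M f \<Longrightarrow> L4 M (\<lambda>x. \<bar>f x\<bar>)"
  unfolding L4_def by (auto intro: borel_measurable_abs)

lemma L4_sum[intro]: "(\<And>i. i \<in> S \<Longrightarrow> L4 M (f i)) \<Longrightarrow> L4 M (\<lambda>x. \<Sum>i\<in>S. f i x)"
  by (induction S rule: infinite_finite_induct) auto

lemma L4_cong: "L4 M f \<Longrightarrow> (\<And>x. x \<in> space M \<Longrightarrow> f x = g x) \<Longrightarrow> L4 M g"
  unfolding L4_def by (simp cong: measurable_cong Bochner_Integration.integrable_cong)

lemma integrable_by_prod4:
  assumes "L4 M a" "L4 M b" "L4 M c" "L4 M d" "g \<in> borel_measurable M"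
    and bound: "\<And>x. x \<in> space M \<Longrightarrow> \<bar>g x\<bar> \<le> C * \<bar>a x * b x * c x * d x\<bar>"
  shows "integrable M g"
proof (rule Bochner_Integration.integrable_bound)
  show "integrable M (\<lambda>x. \<bar>C\<bar> * ((a x) ^ 4 + (b x) ^ 4 + (c x) ^ 4 + (d x) ^ 4))"
    using assms unfolding L4_def by auto
  show "AE x in M. norm (g x) \<le> norm (\<bar>C\<bar> * ((a x) ^ 4 + (b x) ^ 4 + (c x) ^ 4 + (d x) ^ 4))"
  proof (intro AE_I2)
    fix x assume "x \<in> space M"
    then have "\<bar>g x\<bar> \<le> \<bar>C\<bar> * \<bar>a x * b x * c x * d x\<bar>"
      using bound by (smt (verit) abs_ge_zero mult_right_mono)
    also have "\<dots> \<le> \<bar>C\<bar> * ((a x) ^ 4 + (b x) ^ 4 + (c x) ^ 4 + (d x) ^ 4)"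
      by (intro mult_left_mono abs_prod4_le) auto
    finally show "norm (g x) \<le> norm (\<bar>C\<bar> * ((a x) ^ 4 + (b x) ^ 4 + (c x) ^ 4 + (d x) ^ 4))"
      by (simp add: zero_le_even_power)
  qed
qed (use assms in auto)

end

section \<open>The ACIX model\<close>

lemma borel_measurable_fst_interval[measurable]:
  fixes f :: "'a \<Rightarrow> interval"
  shows "f \<in> borel_measurable M \<Longrightarrow> (\<lambda>x. fst (f x)) \<in> borel_measurable M"
proof -
  assume "f \<in> borel_measurable M"
  then have "f \<in> measurable M (borel \<Otimes>\<^sub>M borel)" by (simp add: borel_prod)
  then show ?thesis by (rule measurable_fst')
qed

lemma borel_measurable_snd_interval[measurable]:
  fixes f :: "'a \<Rightarrow> interval"
  shows "f \<in> borel_measurable M \<Longrightarrow> (\<lambda>x. snd (f x)) \<in> borel_measurable M"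
proof -
  assume "f \<in> borel_measurable M"
  then have "f \<in> measurable M (borel \<Otimes>\<^sub>M borel)" by (simp add: borel_prod)
  then show ?thesis by (rule measurable_snd')
qed

lemma lincomb_meas[measurable]:
  "(\<And>i. (\<lambda>\<omega>. A \<omega> $ i) \<in> borel_measurable N) \<Longrightarrow> (\<lambda>\<omega>. lincomb (A \<omega>) \<theta>) \<in> borel_measurable N"
  unfolding lincomb_def by measurable

text \<open>The regressor vector at time 0, read off a path of the joint process; taking the
  one-point sample space unit lets Zvec itself be reused.\<close>

definition path_Y :: "(int \<times> nat \<Rightarrow> interval) \<Rightarrow> int \<Rightarrow> unit \<Rightarrow> interval" where
  "path_Y f t _ = f (t, 0)"

definition path_X :: "(int \<times> nat \<Rightarrow> interval) \<Rightarrow> nat \<Rightarrow> int \<Rightarrow> unit \<Rightarrow> interval" where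
  "path_X f j t _ = f (t, j)"

definition path_Z :: "('p::finite \<Rightarrow> nat) \<Rightarrow> nat \<Rightarrow> nat \<Rightarrow> (int \<times> nat \<Rightarrow> interval) \<Rightarrow> interval ^ 'p" where
  "path_Z idx q J f = Zvec idx q J (path_Y f) (path_X f) 0 ()"

lemma funpow_shift: "(shift ^^ k) f = (\<lambda>(t, j). f (t + int k, j))"
proof (induction k arbitrary: f)
  case (Suc k)
  show ?case by (simp only: funpow_Suc_right comp_def Suc) (simp add: shift_def algebra_simps)
qed simp

lemma space_path_space: "space path_space = UNIV"
  unfolding path_space_def by (simp add: space_PiM PiE_def extensional_def)

lemma shift_meas[measurable]: "shift \<in> measurable path_space path_space"
proof -
  have "(\<lambda>f i. f (fst i + 1, snd i)) \<in> measurable path_space path_space"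
    unfolding path_space_def by (rule measurable_PiM_single') (auto simp: space_PiM)
  moreover have "shift = (\<lambda>f i. f (fst i + 1, snd i))" unfolding shift_def by (auto simp: fun_eq_iff)
  ultimately show ?thesis by simp
qed

lemma path_Z_meas[measurable]: "(\<lambda>f. path_Z idx q J f $ i) \<in> borel_measurable path_space"
  unfolding path_Z_def Zvec_def Zent_def path_Y_def path_X_def path_space_def by simp measurable

lemma sum_atLeastAtMost_int_shift: "(\<Sum>t\<in>{1..int T}. f t) = (\<Sum>k<T. f (int (Suc k)))"
proof (induction T)
  case (Suc T)
  have "{1..int (Suc T)} = insert (int (Suc T)) {1..int T}" by auto
  then show ?case using Suc by (simp add: add.commute)
qed simp

locale acix =
  fixes M :: "'a measure" and K :: "real \<Rightarrow> real \<Rightarrow> real" and q J s p :: nat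
    and idx :: "'p::finite \<Rightarrow> nat"
    and Y :: "int \<Rightarrow> 'a \<Rightarrow> interval" and X :: "nat \<Rightarrow> int \<Rightarrow> 'a \<Rightarrow> interval"
    and u :: "int \<Rightarrow> 'a \<Rightarrow> interval" and \<theta>0 :: "real ^ 'p"
  assumes prob: "prob_space M"
    and kernel: "spd_kernel K"
    and p_def: "p = 2 + q + J * (s + 1)"
    and idx: "bij_betw idx UNIV {..<p}"
    and Y_rv[measurable]: "\<And>t. Y t \<in> borel_measurable M"
    and X_rv: "\<And>j t. 1 \<le> j \<Longrightarrow> j \<le> J \<Longrightarrow> X j t \<in> borel_measurable M"
    and model: "\<And>t \<omega>. \<omega> \<in> space M \<Longrightarrow> Y t \<omega> = lincomb (Zvec idx q J Y X t \<omega>) \<theta>0 + u t \<omega>"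
    and stat: "strictly_stationary M (joint_path J Y X)"
    and erg: "ergodic_proc M (joint_path J Y X)"
    and Y_mom: "\<And>t. integrable M (\<lambda>\<omega>. (normK K (Y t \<omega>)) ^ 4)"
    and X_mom: "\<And>j t. 1 \<le> j \<Longrightarrow> j \<le> J \<Longrightarrow> integrable M (\<lambda>\<omega>. (normK K (X j t \<omega>)) ^ 4)"
    and u_mds: "\<And>t v. v \<in> dirs \<Longrightarrow>
       AE \<omega> in M. real_cond_exp M (info M J Y X (t - 1)) (\<lambda>\<omega>. supp (u t \<omega>) v) \<omega> = 0"
begin

sublocale prob_space M by (rule prob)

abbreviation "Z \<equiv> Zvec idx q J Y X"
abbreviation "W \<equiv> joint_path J Y X"

lemma u_eq: "\<omega> \<in> space M \<Longrightarrow> u t \<omega> = Y t \<omega> - lincomb (Z t \<omega>) \<theta>0"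
  using model[of \<omega> t] by simp

lemma Zent_X_index_le: "\<not> idx i < 2 + q \<Longrightarrow> (idx i - (2 + q)) mod J + 1 \<le> J"
proof -
  assume "\<not> idx i < 2 + q"
  moreover have "idx i < 2 + q + J * (s + 1)" using idx p_def unfolding bij_betw_def by auto
  ultimately have "J > 0" by (cases J) auto
  then show ?thesis by (simp add: Suc_leI)
qed

lemma Z_eq_path_Z: "Z (int k) \<omega> = path_Z idx q J ((shift ^^ k) (W \<omega>))"
proof -
  have "Z (int k) \<omega> $ i = path_Z idx q J ((shift ^^ k) (W \<omega>)) $ i" for i
    using Zent_X_index_le[of i]
    by (cases "idx i < 2 + q")
       (simp_all add: path_Z_def Zvec_def Zent_def path_Y_def path_X_def funpow_shift joint_path_def
         algebra_simps)
  then show ?thesis by (simp add: vec_eq_iff)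
qed

lemma W_meas[measurable]: "W \<in> measurable M path_space"
proof -
  have "(\<lambda>\<omega> i. W \<omega> i) \<in> measurable M path_space"
    unfolding path_space_def
  proof (rule measurable_PiM_single')
    fix i :: "int \<times> nat"
    obtain t j where i: "i = (t, j)" by (cases i)
    show "(\<lambda>\<omega>. W \<omega> i) \<in> borel_measurable M"
      using X_rv[of j t] unfolding joint_path_def i by (cases "j = 0"; cases "j \<le> J") auto
  qed (auto simp: space_PiM)
  then show ?thesis by simp
qed

definition path_law :: "(int \<times> nat \<Rightarrow> interval) measure" where
  "path_law = distr M path_space W"

lemma sets_path_law[simp, measurable_cong]: "sets path_law = sets path_space"
  and space_path_law[simp]: "space path_law = space path_space"
  unfolding path_law_def by auto

lemma measurable_path_law:
  "measurable path_law N = measurable path_space N" "measurable N path_law = measurable N path_space"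
  by (intro measurable_cong_sets; simp)+

lemma measure_path_law:
  "A \<in> sets path_space \<Longrightarrow> measure path_law A = measure M (W -` A \<inter> space M)"
  unfolding path_law_def by (rule measure_distr) auto

lemma path_law_ergodic: "ergodic_map path_law shift"
proof -
  interpret L: prob_space path_law unfolding path_law_def by (rule prob_space_distr) simp
  show ?thesis
  proof
    show "shift \<in> measurable path_law path_law" unfolding measurable_path_law by simp
    have "distr path_law path_law shift = distr path_law path_space shift" by (rule distr_cong) auto
    also have "\<dots> = distr M path_space (shift \<circ> W)" unfolding path_law_def by (rule distr_distr) auto
    also have "\<dots> = path_law" using stat unfolding strictly_stationary_def path_law_def comp_def by simp
    finally show "distr path_law path_law shift = path_law" .
  next
    fix A assume A: "A \<in> sets path_law" "shift -` A \<inter> space path_law = A"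
    have "measure path_law A = measure M (W -` A \<inter> space M)"
      unfolding path_law_def using A by (intro measure_distr) auto
    then show "measure path_law A = 0 \<or> measure path_law A = 1"
      using erg A unfolding ergodic_proc_def by auto
  qed
qed

lemma integral_shift_path:
  fixes F :: "(int \<times> nat \<Rightarrow> interval) \<Rightarrow> real"
  assumes [measurable]: "F \<in> borel_measurable path_space"
  shows "integral\<^sup>L M (\<lambda>\<omega>. F ((shift ^^ k) (W \<omega>))) = integral\<^sup>L M (\<lambda>\<omega>. F (W \<omega>))"
proof -
  interpret E: ergodic_map path_law shift by (rule path_law_ergodic)
  have [measurable]: "(shift ^^ k) \<in> measurable path_space path_space"
    using E.funpow_T_meas[of k] unfolding measurable_path_law .
  have "integral\<^sup>L M (\<lambda>\<omega>. F ((shift ^^ k) (W \<omega>))) = integral\<^sup>L path_law (\<lambda>f. F ((shift ^^ k) f))"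
    unfolding path_law_def by (rule integral_distr[symmetric]) measurable
  also have "\<dots> = integral\<^sup>L path_law F"
    by (rule E.integral_comp_funpow_T) (simp add: measurable_path_law)
  also have "\<dots> = integral\<^sup>L M (\<lambda>\<omega>. F (W \<omega>))"
    unfolding path_law_def by (rule integral_distr) measurable
  finally show ?thesis .
qed

lemma Z_entry_cases:
  obtains c where "(\<lambda>\<omega>. Z t \<omega> $ i) = (\<lambda>_. c)"
  | r where "(\<lambda>\<omega>. Z t \<omega> $ i) = Y r" "r \<le> t - 1"
  | j r where "(\<lambda>\<omega>. Z t \<omega> $ i) = X j r" "1 \<le> j" "j \<le> J" "r \<le> t"
proof -
  consider "idx i = 0" | "idx i = 1" | "2 \<le> idx i" "idx i < 2 + q" | "\<not> idx i < 2 + q"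
    by linarith
  then show ?thesis
  proof cases
    case 1
    then show ?thesis by (intro that(1)[of "(1, 1)"]) (simp add: Zvec_def Zent_def fun_eq_iff)
  next
    case 2
    then show ?thesis by (intro that(1)[of I0]) (simp add: Zvec_def Zent_def fun_eq_iff)
  next
    case 3
    then show ?thesis by (intro that(2)) (auto simp: Zvec_def Zent_def fun_eq_iff)
  next
    case 4
    then show ?thesis using Zent_X_index_le[of i]
      by (intro that(3)) (auto simp: Zvec_def Zent_def fun_eq_iff)
  qed
qed

definition L4_interval :: "('a \<Rightarrow> interval) \<Rightarrow> bool" where
  "L4_interval f \<longleftrightarrow> L4 M (\<lambda>x. fst (f x)) \<and> L4 M (\<lambda>x. snd (f x))"

lemma L4_interval_meas:
  "L4_interval f \<Longrightarrow> (\<lambda>x. fst (f x)) \<in> borel_measurable M"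
  "L4_interval f \<Longrightarrow> (\<lambda>x. snd (f x)) \<in> borel_measurable M"
  unfolding L4_interval_def L4_def by auto

lemma L4_interval_l1_norm: "L4_interval f \<Longrightarrow> L4 M (\<lambda>x. l1_norm (f x))"
  unfolding L4_interval_def l1_norm_def by auto

lemma L4_interval_of_normK:
  assumes [measurable]: "f \<in> borel_measurable M"
    and int: "integrable M (\<lambda>\<omega>. (normK K (f \<omega>)) ^ 4)"
  shows "L4_interval f"
proof -
  let ?k = "kernel_coercivity K"
  have k: "?k > 0" using kernel_coercivity_pos[OF kernel] .
  have L4: "L4 M c" if c: "\<And>x. c x = fst (f x) \<or> c x = snd (f x)"
    and [measurable]: "c \<in> borel_measurable M" for c
  proof -
    have bound: "(c x) ^ 4 \<le> (normK K (f x)) ^ 4 / ?k\<^sup>2" for x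
    proof -
      have "?k * (c x)\<^sup>2 \<le> ?k * ((fst (f x))\<^sup>2 + (snd (f x))\<^sup>2)"
        using c[of x] k by (intro mult_left_mono) auto
      also have "\<dots> \<le> (normK K (f x))\<^sup>2"
        using ipK_self_ge[OF kernel] normK_power2[OF kernel] by simp
      finally have "(c x)\<^sup>2 \<le> (normK K (f x))\<^sup>2 / ?k" using k by (simp add: field_simps)
      then have "((c x)\<^sup>2)\<^sup>2 \<le> ((normK K (f x))\<^sup>2 / ?k)\<^sup>2" by (rule power_mono) simp
      then show ?thesis by (simp add: power2_power2 power_divide)
    qed
    have "integrable M (\<lambda>x. (normK K (f x)) ^ 4 / ?k\<^sup>2)" using int by simp
    moreover have "(\<lambda>x. (c x) ^ 4) \<in> borel_measurable M" by measurable
    moreover have "AE x in M. norm ((c x) ^ 4) \<le> norm ((normK K (f x)) ^ 4 / ?k\<^sup>2)"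
      using bound by (simp add: zero_le_even_power)
    ultimately have "integrable M (\<lambda>x. (c x) ^ 4)" by (rule Bochner_Integration.integrable_bound)
    then show ?thesis unfolding L4_def by simp
  qed
  have "L4 M (\<lambda>x. fst (f x))" "L4 M (\<lambda>x. snd (f x))" by (rule L4; simp)+
  then show ?thesis unfolding L4_interval_def ..
qed

lemma L4_interval_Z: "L4_interval (\<lambda>\<omega>. Z t \<omega> $ i)"
proof (cases rule: Z_entry_cases[of t i])
  case (1 c)
  then show ?thesis by (simp add: L4_interval_def)
next
  case (2 r)
  then show ?thesis using L4_interval_of_normK[OF Y_rv Y_mom] by simp
next
  case (3 j r)
  then show ?thesis using L4_interval_of_normK[OF X_rv X_mom] by simp
qed

lemma L4_interval_lincomb:
  assumes "\<And>i. L4_interval (\<lambda>\<omega>. A \<omega> $ i)"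
  shows "L4_interval (\<lambda>\<omega>. lincomb (A \<omega>) \<theta>)"
  unfolding L4_interval_def lincomb_def fst_sum snd_sum
  by (intro conjI L4_sum L4_cmult) (use assms in \<open>auto simp: L4_interval_def\<close>)

lemma L4_interval_u: "L4_interval (u t)"
proof -
  have "L4_interval (\<lambda>\<omega>. Y t \<omega> - lincomb (Z t \<omega>) \<theta>0)"
    using L4_interval_of_normK[OF Y_rv Y_mom] L4_interval_lincomb[OF L4_interval_Z]
    unfolding L4_interval_def by auto
  then show ?thesis unfolding L4_interval_def by (auto elim: L4_cong simp: u_eq)
qed

lemma ipK_meas:
  "L4_interval f \<Longrightarrow> L4_interval g \<Longrightarrow> (\<lambda>x. ipK K (f x) (g x)) \<in> borel_measurable M"
  unfolding ipK_eq using L4_interval_meas by measurable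

lemma integrable_ipK_mult:
  assumes "L4_interval f" "L4_interval g" "L4 M a" "L4 M b"
  shows "integrable M (\<lambda>x. ipK K (f x) (g x) * a x * b x)"
proof (rule integrable_by_prod4[OF L4_interval_l1_norm[OF assms(1)] L4_interval_l1_norm[OF assms(2)] assms(3,4)])
  have [measurable]: "a \<in> borel_measurable M" "b \<in> borel_measurable M"
    using assms(3,4) unfolding L4_def by auto
  show "(\<lambda>x. ipK K (f x) (g x) * a x * b x) \<in> borel_measurable M"
    using ipK_meas[OF assms(1,2)] by measurable
  fix x
  have "\<bar>ipK K (f x) (g x) * a x * b x\<bar> = \<bar>ipK K (f x) (g x)\<bar> * \<bar>a x * b x\<bar>" by (simp add: abs_mult)
  also have "\<dots> \<le> kernel_bound K * l1_norm (f x) * l1_norm (g x) * \<bar>a x * b x\<bar>"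
    by (intro mult_right_mono abs_ipK_le) auto
  finally show "\<bar>ipK K (f x) (g x) * a x * b x\<bar>
      \<le> kernel_bound K * \<bar>l1_norm (f x) * l1_norm (g x) * a x * b x\<bar>"
    using l1_norm_nonneg by (simp add: abs_mult mult.assoc)
qed

lemma integrable_ipK:
  "L4_interval f \<Longrightarrow> L4_interval g \<Longrightarrow> integrable M (\<lambda>x. ipK K (f x) (g x))"
  using integrable_ipK_mult[of f g "\<lambda>_. 1" "\<lambda>_. 1"] by simp

lemma integrable_ipK_ipK:
  assumes "L4_interval f" "L4_interval g" "L4_interval h" "L4_interval k"
  shows "integrable M (\<lambda>x. ipK K (f x) (g x) * ipK K (h x) (k x))"
proof (rule integrable_by_prod4[OF assms[THEN L4_interval_l1_norm]])
  show "(\<lambda>x. ipK K (f x) (g x) * ipK K (h x) (k x)) \<in> borel_measurable M"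
    using ipK_meas[OF assms(1,2)] ipK_meas[OF assms(3,4)] by measurable
  fix x
  have "\<bar>ipK K (f x) (g x) * ipK K (h x) (k x)\<bar>
      \<le> (kernel_bound K * l1_norm (f x) * l1_norm (g x)) * (kernel_bound K * l1_norm (h x) * l1_norm (k x))"
    unfolding abs_mult by (intro mult_mono abs_ipK_le) (auto simp: kernel_bound_def l1_norm_nonneg)
  then show "\<bar>ipK K (f x) (g x) * ipK K (h x) (k x)\<bar>
      \<le> (kernel_bound K)\<^sup>2 * \<bar>l1_norm (f x) * l1_norm (g x) * l1_norm (h x) * l1_norm (k x)\<bar>"
    using l1_norm_nonneg by (simp add: abs_mult power2_eq_square algebra_simps)
qed

definition info_gen :: "int \<Rightarrow> 'a set set" where
  "info_gen t = {Y r -` B \<inter> space M | r B. r \<le> t \<and> B \<in> sets (borel :: interval measure)} \<union>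
      {X j r -` B \<inter> space M | j r B. 1 \<le> j \<and> j \<le> J \<and> r \<le> t + 1 \<and> B \<in> sets (borel :: interval measure)}"

lemma sets_info: "sets (info M J Y X t) = sigma_sets (space M) (info_gen t)"
  unfolding info_def info_gen_def[symmetric] by (rule sets_measure_of) (auto simp: info_gen_def)

lemma space_info[simp]: "space (info M J Y X t) = space M"
  unfolding info_def info_gen_def[symmetric] by (rule space_measure_of) (auto simp: info_gen_def)

lemma info_subalgebra: "subalgebra M (info M J Y X t)"
proof -
  have "info_gen t \<subseteq> sets M"
    using measurable_sets[OF Y_rv] measurable_sets[OF X_rv] by (auto simp: info_gen_def)
  then show ?thesis unfolding subalgebra_def sets_info using sets.sigma_sets_subset by auto
qed

lemma Y_info: "r \<le> t \<Longrightarrow> Y r \<in> borel_measurable (info M J Y X t)"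
  by (rule measurableI) (auto simp: sets_info info_gen_def intro!: sigma_sets.Basic)

lemma X_info: "1 \<le> j \<Longrightarrow> j \<le> J \<Longrightarrow> r \<le> t + 1 \<Longrightarrow> X j r \<in> borel_measurable (info M J Y X t)"
  by (rule measurableI) (auto simp: sets_info info_gen_def intro!: sigma_sets.Basic)

lemma Z_info: "r \<le> t + 1 \<Longrightarrow> (\<lambda>\<omega>. Z r \<omega> $ i) \<in> borel_measurable (info M J Y X t)"
  by (cases rule: Z_entry_cases[of r i]) (auto intro: Y_info X_info)

lemma u_info: "r \<le> t \<Longrightarrow> u r \<in> borel_measurable (info M J Y X t)"
proof -
  assume rt: "r \<le> t"
  have [measurable]: "Y r \<in> borel_measurable (info M J Y X t)"
    "(\<lambda>\<omega>. Z r \<omega> $ i) \<in> borel_measurable (info M J Y X t)" for i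
    using rt by (auto intro: Y_info Z_info)
  have "(\<lambda>\<omega>. Y r \<omega> - lincomb (Z r \<omega>) \<theta>0) \<in> borel_measurable (info M J Y X t)"
    by measurable
  then show ?thesis by (rule measurable_cong[THEN iffD1, rotated]) (simp add: u_eq)
qed

lemma integral_mult_u_eq_0:
  assumes hF: "h \<in> borel_measurable (info M J Y X (t - 1))"
    and int: "integrable M (\<lambda>x. h x * fst (u t x))" "integrable M (\<lambda>x. h x * snd (u t x))"
  shows "integral\<^sup>L M (\<lambda>x. h x * fst (u t x)) = 0" "integral\<^sup>L M (\<lambda>x. h x * snd (u t x)) = 0"
proof -
  interpret F: finite_measure_subalgebra M "info M J Y X (t - 1)"
    by (intro finite_measure_subalgebra.intro finite_measure_subalgebra_axioms.intro info_subalgebra)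
       (rule finite_measure_axioms)
  have u_meas: "(\<lambda>x. fst (u t x)) \<in> borel_measurable M" "(\<lambda>x. snd (u t x)) \<in> borel_measurable M"
    using L4_interval_meas[OF L4_interval_u] by auto
  have "integral\<^sup>L M (\<lambda>x. h x * c x) = 0"
    if c: "c = (\<lambda>x. snd (u t x)) \<or> c = (\<lambda>x. - fst (u t x))" and "integrable M (\<lambda>x. h x * c x)" for c
  proof -
    have ae: "AE x in M. real_cond_exp M (info M J Y X (t - 1)) c x = 0"
      using c u_mds[of 1 t] u_mds[of "-1" t] by (auto simp: dirs_def supp_def)
    have "integral\<^sup>L M (\<lambda>x. h x * c x)
        = integral\<^sup>L M (\<lambda>x. h x * real_cond_exp M (info M J Y X (t - 1)) c x)"
      by (rule F.real_cond_exp_intg(2)[symmetric]) (use that hF u_meas in auto)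
    also have "\<dots> = 0" using ae by (intro integral_eq_zero_AE) auto
    finally show ?thesis .
  qed
  from this[of "\<lambda>x. - fst (u t x)"] this[of "\<lambda>x. snd (u t x)"]
  show "integral\<^sup>L M (\<lambda>x. h x * fst (u t x)) = 0" "integral\<^sup>L M (\<lambda>x. h x * snd (u t x)) = 0"
    using int by simp_all
qed

end

section \<open>Score and Hessian\<close>

context acix
begin

definition score_term :: "'p \<Rightarrow> int \<Rightarrow> 'a \<Rightarrow> real" where
  "score_term i t \<omega> = ipK K (Z t \<omega> $ i) (u t \<omega>)"

lemma score_term_meas[measurable]: "score_term i t \<in> borel_measurable M"
  unfolding score_term_def by (rule ipK_meas[OF L4_interval_Z L4_interval_u])

lemma score_term_info: "r \<le> t \<Longrightarrow> score_term i r \<in> borel_measurable (info M J Y X t)"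
proof -
  assume rt: "r \<le> t"
  have [measurable]: "(\<lambda>\<omega>. Z r \<omega> $ i) \<in> borel_measurable (info M J Y X t)"
    "u r \<in> borel_measurable (info M J Y X t)"
    using Z_info u_info rt by auto
  show ?thesis unfolding score_term_def ipK_eq by measurable
qed

lemma integrable_score_term_mult: "integrable M (\<lambda>\<omega>. score_term i r \<omega> * score_term i t \<omega>)"
  unfolding score_term_def by (rule integrable_ipK_ipK[OF L4_interval_Z L4_interval_u L4_interval_Z L4_interval_u])

text \<open>For r < t the product of the two score terms is a combination of h * fst (u t) and
  h * snd (u t) with h measurable for I_{t-1}, so the martingale difference hypothesis
  kills its expectation.\<close>

lemma integral_score_term_cross:
  assumes "r < t"
  shows "integral\<^sup>L M (\<lambda>\<omega>. score_term i r \<omega> * score_term i t \<omega>) = 0"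
proof -
  define h1 where "h1 \<omega> = score_term i r \<omega> * snd (Z t \<omega> $ i)" for \<omega>
  define h2 where "h2 \<omega> = score_term i r \<omega> * fst (Z t \<omega> $ i)" for \<omega>
  have [measurable]: "score_term i r \<in> borel_measurable (info M J Y X (t - 1))"
    "(\<lambda>\<omega>. Z t \<omega> $ i) \<in> borel_measurable (info M J Y X (t - 1))"
    using score_term_info Z_info assms by auto
  have h_info: "h1 \<in> borel_measurable (info M J Y X (t - 1))" "h2 \<in> borel_measurable (info M J Y X (t - 1))"
    unfolding h1_def h2_def by measurable
  have int: "integrable M (\<lambda>x. h x * c x)"
    if "h = h1 \<or> h = h2" "c = (\<lambda>\<omega>. fst (u t \<omega>)) \<or> c = (\<lambda>\<omega>. snd (u t \<omega>))" for h c
  proof -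
    have "L4 M c" "L4 M (\<lambda>\<omega>. fst (Z t \<omega> $ i))" "L4 M (\<lambda>\<omega>. snd (Z t \<omega> $ i))"
      using that L4_interval_u L4_interval_Z unfolding L4_interval_def by auto
    then show ?thesis
      using that integrable_ipK_mult[OF L4_interval_Z L4_interval_u]
      unfolding h1_def h2_def score_term_def by (auto simp: mult.assoc)
  qed
  have "score_term i r \<omega> * score_term i t \<omega> = K 1 1 * (h1 \<omega> * snd (u t \<omega>))
      - K 1 (-1) * (h1 \<omega> * fst (u t \<omega>)) - K (-1) 1 * (h2 \<omega> * snd (u t \<omega>))
      + K (-1) (-1) * (h2 \<omega> * fst (u t \<omega>))" for \<omega>
    unfolding h1_def h2_def score_term_def[of i t] ipK_eq[of K "Z t \<omega> $ i"] by (simp add: algebra_simps)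
  then show ?thesis
    using int integral_mult_u_eq_0[OF h_info(1)] integral_mult_u_eq_0[OF h_info(2)] by simp
qed

lemma integral_sum_score_term_sq:
  assumes "finite S"
  shows "integral\<^sup>L M (\<lambda>\<omega>. (\<Sum>t\<in>S. score_term i t \<omega>)\<^sup>2) = (\<Sum>t\<in>S. integral\<^sup>L M (\<lambda>\<omega>. (score_term i t \<omega>)\<^sup>2))"
proof -
  have "(\<lambda>\<omega>. (\<Sum>t\<in>S. score_term i t \<omega>)\<^sup>2)
      = (\<lambda>\<omega>. \<Sum>r\<in>S. \<Sum>t\<in>S. score_term i r \<omega> * score_term i t \<omega>)"
    by (simp add: power2_eq_square sum_product)
  then have "integral\<^sup>L M (\<lambda>\<omega>. (\<Sum>t\<in>S. score_term i t \<omega>)\<^sup>2)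
      = (\<Sum>r\<in>S. \<Sum>t\<in>S. integral\<^sup>L M (\<lambda>\<omega>. score_term i r \<omega> * score_term i t \<omega>))"
    using integrable_score_term_mult
    by (simp add: Bochner_Integration.integral_sum Bochner_Integration.integrable_sum)
  also have "\<dots> = (\<Sum>r\<in>S. \<Sum>t\<in>S. if t = r then integral\<^sup>L M (\<lambda>\<omega>. (score_term i r \<omega>)\<^sup>2) else 0)"
  proof (intro sum.cong refl)
    fix r t :: int
    have "integral\<^sup>L M (\<lambda>\<omega>. score_term i r \<omega> * score_term i t \<omega>) = 0" if "t < r"
      using integral_score_term_cross[OF that, of i] by (simp add: mult.commute)
    then show "integral\<^sup>L M (\<lambda>\<omega>. score_term i r \<omega> * score_term i t \<omega>)
        = (if t = r then integral\<^sup>L M (\<lambda>\<omega>. (score_term i r \<omega>)\<^sup>2) else 0)"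
      using integral_score_term_cross[of r t i] by (cases "t = r") (auto simp: power2_eq_square neq_iff)
  qed
  also have "\<dots> = (\<Sum>r\<in>S. integral\<^sup>L M (\<lambda>\<omega>. (score_term i r \<omega>)\<^sup>2))"
    using assms by simp
  finally show ?thesis .
qed

definition path_u :: "(int \<times> nat \<Rightarrow> interval) \<Rightarrow> interval" where
  "path_u f = f (0, 0) - lincomb (path_Z idx q J f) \<theta>0"

definition path_score_term :: "'p \<Rightarrow> (int \<times> nat \<Rightarrow> interval) \<Rightarrow> real" where
  "path_score_term i f = ipK K (path_Z idx q J f $ i) (path_u f)"

lemma path_score_term_meas[measurable]: "path_score_term i \<in> borel_measurable path_space"
proof -
  have [measurable]: "(\<lambda>f. f (0::int, 0::nat)) \<in> borel_measurable path_space"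
    unfolding path_space_def by measurable
  show ?thesis unfolding path_score_term_def path_u_def ipK_eq by measurable
qed

lemma score_term_eq_path:
  "\<omega> \<in> space M \<Longrightarrow> score_term i (int k) \<omega> = path_score_term i ((shift ^^ k) (W \<omega>))"
  unfolding score_term_def path_score_term_def path_u_def u_eq Z_eq_path_Z
  by (simp add: funpow_shift joint_path_def)

definition score_var :: "'p \<Rightarrow> real" where
  "score_var i = integral\<^sup>L M (\<lambda>\<omega>. (path_score_term i (W \<omega>))\<^sup>2)"

lemma score_var_nonneg: "0 \<le> score_var i"
  unfolding score_var_def by (rule integral_nonneg_AE) auto

lemma integral_score_term_sq: "0 \<le> t \<Longrightarrow> integral\<^sup>L M (\<lambda>\<omega>. (score_term i t \<omega>)\<^sup>2) = score_var i"
proof -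
  assume "0 \<le> t"
  then obtain k where k: "t = int k" by (metis nonneg_eq_int)
  have "integral\<^sup>L M (\<lambda>\<omega>. (score_term i t \<omega>)\<^sup>2) = integral\<^sup>L M (\<lambda>\<omega>. (path_score_term i ((shift ^^ k) (W \<omega>)))\<^sup>2)"
    unfolding k by (rule Bochner_Integration.integral_cong) (auto simp: score_term_eq_path)
  also have "\<dots> = score_var i" unfolding score_var_def by (rule integral_shift_path) measurable
  finally show ?thesis .
qed

definition score :: "nat \<Rightarrow> 'a \<Rightarrow> real ^ 'p" where
  "score T \<omega> = (\<chi> i. \<Sum>t\<in>{1..int T}. score_term i t \<omega>)"

lemma norm_score_power2: "(norm (score T \<omega>))\<^sup>2 = (\<Sum>i\<in>UNIV. (\<Sum>t\<in>{1..int T}. score_term i t \<omega>)\<^sup>2)"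
  unfolding power2_norm_eq_inner inner_vec_def score_def by (simp add: power2_eq_square)

lemma norm_score_meas[measurable]: "(\<lambda>\<omega>. norm (score T \<omega>)) \<in> borel_measurable M"
  unfolding norm_vec_def L2_set_def score_def by simp measurable

lemma integrable_sum_score_term_power2:
  "integrable M (\<lambda>\<omega>. (\<Sum>t\<in>{1..int T}. score_term i t \<omega>)\<^sup>2)"
  using integrable_score_term_mult by (simp add: power2_eq_square sum_product)

lemma integral_norm_score_power2:
  "integral\<^sup>L M (\<lambda>\<omega>. (norm (score T \<omega>))\<^sup>2) = real T * (\<Sum>i\<in>UNIV. score_var i)"
proof -
  have "integral\<^sup>L M (\<lambda>\<omega>. (norm (score T \<omega>))\<^sup>2)
      = (\<Sum>i\<in>UNIV. \<Sum>t\<in>{1..int T}. integral\<^sup>L M (\<lambda>\<omega>. (score_term i t \<omega>)\<^sup>2))"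
    unfolding norm_score_power2 using integrable_sum_score_term_power2
    by (simp add: integral_sum_score_term_sq)
  also have "\<dots> = real T * (\<Sum>i\<in>UNIV. score_var i)"
    by (simp add: integral_score_term_sq sum_distrib_left)
  finally show ?thesis .
qed

lemma score_tail:
  assumes "T > 0" "C > 0"
  shows "measure M {\<omega> \<in> space M. C * sqrt (real T) \<le> norm (score T \<omega>)} \<le> (\<Sum>i\<in>UNIV. score_var i) / C\<^sup>2"
proof -
  have int: "integrable M (\<lambda>\<omega>. (norm (score T \<omega>))\<^sup>2)"
    unfolding norm_score_power2 using integrable_sum_score_term_power2 by simp
  have "{\<omega> \<in> space M. C * sqrt (real T) \<le> norm (score T \<omega>)}
      \<subseteq> {\<omega> \<in> space M. C\<^sup>2 * real T \<le> (norm (score T \<omega>))\<^sup>2}"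
    using assms power_mono[of "C * sqrt (real T)" _ 2] by (auto simp: power_mult_distrib)
  then have "measure M {\<omega> \<in> space M. C * sqrt (real T) \<le> norm (score T \<omega>)}
      \<le> measure M {\<omega> \<in> space M. C\<^sup>2 * real T \<le> (norm (score T \<omega>))\<^sup>2}"
    by (intro finite_measure_mono) measurable
  also have "\<dots> \<le> integral\<^sup>L M (\<lambda>\<omega>. (norm (score T \<omega>))\<^sup>2) / (C\<^sup>2 * real T)"
    using assms by (intro integral_Markov_inequality_measure[OF int, where A="space M"]) auto
  also have "\<dots> = (\<Sum>i\<in>UNIV. score_var i) / C\<^sup>2"
    using assms unfolding integral_norm_score_power2 by simp
  finally show ?thesis .
qed

lemma score_bounded_in_probability:
  assumes "\<epsilon> > 0"
  obtains C where "C > 0"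
    "\<And>T. T > 0 \<Longrightarrow> measure M {\<omega> \<in> space M. C * sqrt (real T) \<le> norm (score T \<omega>)} < \<epsilon>"
proof
  define B where "B = (\<Sum>i\<in>UNIV. score_var i)"
  have B: "0 \<le> B" unfolding B_def by (intro sum_nonneg score_var_nonneg)
  then have "0 \<le> B / \<epsilon>" using assms by simp
  then show C: "sqrt (B / \<epsilon> + 1) > 0" by simp
  fix T :: nat assume "T > 0"
  have "measure M {\<omega> \<in> space M. sqrt (B / \<epsilon> + 1) * sqrt (real T) \<le> norm (score T \<omega>)}
      \<le> B / (sqrt (B / \<epsilon> + 1))\<^sup>2"
    using score_tail[OF \<open>T > 0\<close> C] unfolding B_def .
  also have "\<dots> < \<epsilon>" using assms B by (simp add: field_simps)
  finally show "measure M {\<omega> \<in> space M. sqrt (B / \<epsilon> + 1) * sqrt (real T) \<le> norm (score T \<omega>)} < \<epsilon>" .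
qed

definition gram_mean :: "'p \<Rightarrow> 'p \<Rightarrow> real" where
  "gram_mean i j = integral\<^sup>L M (\<lambda>\<omega>. ipK K (Z 0 \<omega> $ i) (Z 0 \<omega> $ j))"

definition hessian :: "nat \<Rightarrow> 'a \<Rightarrow> 'p \<Rightarrow> 'p \<Rightarrow> real" where
  "hessian T \<omega> i j = (\<Sum>t\<in>{1..int T}. ipK K (Z t \<omega> $ i) (Z t \<omega> $ j))"

lemma hessian_meas[measurable]: "(\<lambda>\<omega>. hessian T \<omega> i j) \<in> borel_measurable M"
  unfolding hessian_def using ipK_meas[OF L4_interval_Z L4_interval_Z] by measurable

definition path_gram :: "'p \<Rightarrow> 'p \<Rightarrow> (int \<times> nat \<Rightarrow> interval) \<Rightarrow> real" where
  "path_gram i j f = ipK K (path_Z idx q J f $ i) (path_Z idx q J f $ j)"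

lemma hessian_entry_deviation_tendsto:
  assumes "\<eta> > 0"
  shows "(\<lambda>T. measure M {\<omega> \<in> space M. real T * \<eta> \<le> \<bar>hessian T \<omega> i j - real T * gram_mean i j\<bar>}) \<longlonglongrightarrow> 0"
proof -
  interpret E: ergodic_map path_law shift by (rule path_law_ergodic)
  have [measurable]: "path_gram i j \<in> borel_measurable path_space"
    unfolding path_gram_def ipK_eq by measurable
  define F where "F f = path_gram i j (shift f)" for f
  have gram_W: "path_gram i j (W \<omega>) = ipK K (Z 0 \<omega> $ i) (Z 0 \<omega> $ j)" for \<omega>
    using Z_eq_path_Z[of 0 \<omega>] by (simp add: path_gram_def)
  have "integrable path_law (path_gram i j)"
    unfolding path_law_def using integrable_ipK[OF L4_interval_Z L4_interval_Z]
    by (subst integrable_distr_eq) (auto simp: gram_W)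
  then have F_int: "integrable path_law F"
    using E.integrable_comp_funpow_T[of _ 1] unfolding F_def by simp
  have "integral\<^sup>L path_law F = integral\<^sup>L path_law (path_gram i j)"
    using E.integral_comp_funpow_T[of "path_gram i j" 1] unfolding F_def by (simp add: measurable_path_law)
  also have "\<dots> = gram_mean i j"
    unfolding path_law_def gram_mean_def by (subst integral_distr) (auto simp: gram_W)
  finally have F_mean: "integral\<^sup>L path_law F = gram_mean i j" .
  have birkhoff: "E.birkhoff_sum F T (W \<omega>) = hessian T \<omega> i j" for T \<omega>
    unfolding E.birkhoff_sum_def F_def hessian_def sum_atLeastAtMost_int_shift Z_eq_path_Z path_gram_def
    by simp
  have [measurable]: "E.birkhoff_sum F n \<in> borel_measurable path_space" for n
    using E.birkhoff_sum_meas[of F n] F_int unfolding measurable_path_law by auto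
  have "measure path_law {f \<in> space path_law. real n * \<eta> \<le> \<bar>E.birkhoff_sum F n f - real n * integral\<^sup>L path_law F\<bar>}
      = measure M {\<omega> \<in> space M. real n * \<eta> \<le> \<bar>hessian n \<omega> i j - real n * gram_mean i j\<bar>}" for n
  proof -
    let ?A = "{f \<in> space path_space. real n * \<eta> \<le> \<bar>E.birkhoff_sum F n f - real n * gram_mean i j\<bar>}"
    have "?A \<in> sets path_space" by measurable
    then have "measure path_law ?A = measure M (W -` ?A \<inter> space M)" by (rule measure_path_law)
    also have "W -` ?A \<inter> space M = {\<omega> \<in> space M. real n * \<eta> \<le> \<bar>hessian n \<omega> i j - real n * gram_mean i j\<bar>}"
      by (auto simp: space_path_space birkhoff)
    finally show ?thesis by (simp add: F_mean)
  qed
  then show ?thesis using E.ergodic_weak_law[OF F_int assms] by simp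
qed

lemma hessian_deviation_tendsto:
  assumes "\<eta> > 0"
  shows "(\<lambda>T. measure M {\<omega> \<in> space M. \<exists>i j. real T * \<eta> \<le> \<bar>hessian T \<omega> i j - real T * gram_mean i j\<bar>}) \<longlonglongrightarrow> 0"
proof -
  let ?A = "\<lambda>T i j. {\<omega> \<in> space M. real T * \<eta> \<le> \<bar>hessian T \<omega> i j - real T * gram_mean i j\<bar>}"
  have sets: "?A T i j \<in> sets M" for T i j by measurable
  have "measure M {\<omega> \<in> space M. \<exists>i j. real T * \<eta> \<le> \<bar>hessian T \<omega> i j - real T * gram_mean i j\<bar>}
      = measure M (\<Union>i. \<Union>j. ?A T i j)" for T
    by (rule arg_cong[where f="measure M"]) auto
  also have "\<dots> T \<le> (\<Sum>i\<in>UNIV. \<Sum>j\<in>UNIV. measure M (?A T i j))" for T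
    by (rule order_trans[OF measure_UNION_le sum_mono[OF measure_UNION_le]]) (auto simp: sets)
  finally have le: "measure M {\<omega> \<in> space M. \<exists>i j. real T * \<eta> \<le> \<bar>hessian T \<omega> i j - real T * gram_mean i j\<bar>}
      \<le> (\<Sum>i\<in>UNIV. \<Sum>j\<in>UNIV. measure M (?A T i j))" for T .
  have lim: "(\<lambda>T. \<Sum>i\<in>UNIV. \<Sum>j\<in>UNIV. measure M (?A T i j)) \<longlonglongrightarrow> 0"
    by (intro tendsto_null_sum hessian_entry_deviation_tendsto assms)
  show ?thesis
    by (rule tendsto_sandwich[OF eventuallyI eventuallyI tendsto_const lim]) (rule measure_nonneg, rule le)
qed

lemma hessian_qform_ge:
  assumes coercive: "\<And>x. c0 * (norm x)\<^sup>2 \<le> qform gram_mean x"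
    and close: "\<And>i j. \<bar>hessian T \<omega> i j - real T * gram_mean i j\<bar> \<le> real T * (c0 / (2 * real CARD('p) ^ 2))"
  shows "real T * c0 / 2 * (norm x)\<^sup>2 \<le> qform (hessian T \<omega>) x"
proof -
  have "real T * c0 * (norm x)\<^sup>2 \<le> qform (\<lambda>i j. real T * gram_mean i j) x"
    unfolding qform_scale using coercive[of x] by (simp add: mult_left_mono mult.assoc)
  from qform_perturb[OF this close] show ?thesis by (simp add: field_simps)
qed

lemma DK_obj_eq:
  assumes "\<omega> \<in> space M"
  shows "DK_obj K Y Z T \<omega> \<theta> = DK_obj K Y Z T \<omega> \<theta>0 - 2 * ((\<theta> - \<theta>0) \<bullet> score T \<omega>)
    + qform (hessian T \<omega>) (\<theta> - \<theta>0)"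
proof -
  define \<delta> where "\<delta> = \<theta> - \<theta>0"
  have res: "Y t \<omega> - lincomb (Z t \<omega>) \<theta> = u t \<omega> - lincomb (Z t \<omega>) \<delta>" for t
    using u_eq[OF assms, of t] lincomb_add_right[of "Z t \<omega>" \<theta>0 \<delta>] unfolding \<delta>_def by simp
  have sq: "(normK K (u t \<omega> - lincomb (Z t \<omega>) \<delta>))\<^sup>2 = (normK K (u t \<omega>))\<^sup>2
      - 2 * ipK K (lincomb (Z t \<omega>) \<delta>) (u t \<omega>) + ipK K (lincomb (Z t \<omega>) \<delta>) (lincomb (Z t \<omega>) \<delta>)" for t
    unfolding normK_power2[OF kernel] ipK_diff_left ipK_diff_right
      ipK_commute[OF kernel, of "u t \<omega>" "lincomb (Z t \<omega>) \<delta>"] by simp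
  have cross: "(\<Sum>t\<in>{1..int T}. ipK K (lincomb (Z t \<omega>) \<delta>) (u t \<omega>)) = \<delta> \<bullet> score T \<omega>"
    unfolding ipK_lincomb_left inner_vec_def score_def score_term_def
    by (simp add: sum_distrib_left sum.swap[of _ UNIV])
  have quad: "(\<Sum>t\<in>{1..int T}. ipK K (lincomb (Z t \<omega>) \<delta>) (lincomb (Z t \<omega>) \<delta>)) = qform (hessian T \<omega>) \<delta>"
    unfolding ipK_lincomb_lincomb hessian_def qform_sum ..
  have "DK_obj K Y Z T \<omega> \<theta>0 = (\<Sum>t\<in>{1..int T}. (normK K (u t \<omega>))\<^sup>2)"
    unfolding DK_obj_def using u_eq[OF assms] by simp
  then show ?thesis
    unfolding DK_obj_def res sq sum.distrib sum_subtractf cross[symmetric] quad[symmetric] \<delta>_def[symmetric]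
    by (simp add: sum_distrib_left)
qed

end

section \<open>The estimators\<close>

lemma (in finite_measure) bigO_pI:
  assumes "\<And>\<epsilon>. \<epsilon> > 0 \<Longrightarrow> \<exists>C N. \<forall>n\<ge>N. \<exists>B\<in>sets M. measure M B < \<epsilon> \<and>
      (\<forall>\<omega>\<in>space M - B. \<bar>Xn n \<omega>\<bar> \<le> C * a n)"
  shows "bigO_p M Xn a"
  unfolding bigO_p_def
proof (intro allI impI)
  fix \<epsilon> :: real assume "\<epsilon> > 0"
  then obtain C N where CN: "\<And>n. n \<ge> N \<Longrightarrow> \<exists>B\<in>sets M. measure M B < \<epsilon> \<and>
      (\<forall>\<omega>\<in>space M - B. \<bar>Xn n \<omega>\<bar> \<le> C * a n)"
    using assms by blast
  have "measure M {\<omega> \<in> space M. \<bar>Xn n \<omega>\<bar> > C * a n} < \<epsilon>" if n: "n \<ge> N" for n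
  proof -
    obtain B where B: "B \<in> sets M" "measure M B < \<epsilon>"
      and bound: "\<forall>\<omega>\<in>space M - B. \<bar>Xn n \<omega>\<bar> \<le> C * a n"
      using CN[OF n] by blast
    have "{\<omega> \<in> space M. \<bar>Xn n \<omega>\<bar> > C * a n} \<subseteq> B"
    proof
      fix \<omega> assume "\<omega> \<in> {\<omega> \<in> space M. \<bar>Xn n \<omega>\<bar> > C * a n}"
      then have "\<omega> \<in> space M" "\<not> \<bar>Xn n \<omega>\<bar> \<le> C * a n" by auto
      then show "\<omega> \<in> B" using bound by blast
    qed
    then show ?thesis using finite_measure_mono[OF _ B(1)] B(2) by (meson le_less_trans)
  qed
  then show "\<exists>C N. \<forall>n\<ge>N. measure M {\<omega> \<in> space M. \<bar>Xn n \<omega>\<bar> > C * a n} < \<epsilon>" by blast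
qed

lemma nonzero_abs_lower_bound:
  fixes x :: "real ^ 'p::finite"
  obtains m where "m > 0" "\<And>j. x $ j \<noteq> 0 \<Longrightarrow> m \<le> \<bar>x $ j\<bar>"
proof
  let ?S = "insert 1 ((\<lambda>j. \<bar>x $ j\<bar>) ` {j. x $ j \<noteq> 0})"
  show "Min ?S > 0" by (subst Min_gr_iff) auto
  show "Min ?S \<le> \<bar>x $ j\<bar>" if "x $ j \<noteq> 0" for j using that by (intro Min_le) auto
qed

lemma adaptive_penalty_diff_ge:
  fixes \<theta> \<theta>0 \<theta>t :: "real ^ 'p::finite"
  assumes w: "w > 0" and \<gamma>: "0 \<le> \<gamma>" and big: "\<And>j. \<theta>0 $ j \<noteq> 0 \<Longrightarrow> w \<le> \<bar>\<theta>t $ j\<bar>"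
  shows "- (real CARD('p) / w powr \<gamma>) * norm (\<theta> - \<theta>0)
    \<le> (\<Sum>j\<in>{j. \<theta>t $ j \<noteq> 0}. \<bar>\<theta> $ j\<bar> / \<bar>\<theta>t $ j\<bar> powr \<gamma>) - (\<Sum>j\<in>{j. \<theta>t $ j \<noteq> 0}. \<bar>\<theta>0 $ j\<bar> / \<bar>\<theta>t $ j\<bar> powr \<gamma>)"
proof -
  let ?J = "{j. \<theta>t $ j \<noteq> 0}" and ?d = "norm (\<theta> - \<theta>0)"
  have summand: "- (?d / w powr \<gamma>) \<le> \<bar>\<theta> $ j\<bar> / \<bar>\<theta>t $ j\<bar> powr \<gamma> - \<bar>\<theta>0 $ j\<bar> / \<bar>\<theta>t $ j\<bar> powr \<gamma>" for j
  proof (cases "\<theta>0 $ j = 0")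
    case True
    have "0 \<le> ?d / w powr \<gamma>" "0 \<le> \<bar>\<theta> $ j\<bar> / \<bar>\<theta>t $ j\<bar> powr \<gamma>"
      "\<bar>\<theta>0 $ j\<bar> / \<bar>\<theta>t $ j\<bar> powr \<gamma> = 0"
      using True by simp_all
    then show ?thesis by linarith
  next
    case False
    have w_le: "w powr \<gamma> \<le> \<bar>\<theta>t $ j\<bar> powr \<gamma>" using big[OF False] w \<gamma> by (intro powr_mono2) auto
    have "\<bar>(\<theta> - \<theta>0) $ j\<bar> \<le> ?d" by (rule component_le_norm_cart)
    then have "- ?d / \<bar>\<theta>t $ j\<bar> powr \<gamma> \<le> (\<bar>\<theta> $ j\<bar> - \<bar>\<theta>0 $ j\<bar>) / \<bar>\<theta>t $ j\<bar> powr \<gamma>"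
      by (intro divide_right_mono) auto
    moreover have "- (?d / w powr \<gamma>) \<le> - ?d / \<bar>\<theta>t $ j\<bar> powr \<gamma>"
      using w w_le by (simp add: frac_le)
    ultimately show ?thesis by (simp add: diff_divide_distrib)
  qed
  have "- (real CARD('p) * (?d / w powr \<gamma>)) \<le> - (real (card ?J) * (?d / w powr \<gamma>))"
    by (intro le_imp_neg_le mult_right_mono) (auto simp: card_mono)
  also have "\<dots> \<le> (\<Sum>j\<in>?J. \<bar>\<theta> $ j\<bar> / \<bar>\<theta>t $ j\<bar> powr \<gamma> - \<bar>\<theta>0 $ j\<bar> / \<bar>\<theta>t $ j\<bar> powr \<gamma>)"
    using sum_mono[of ?J "\<lambda>_. - (?d / w powr \<gamma>)", OF summand] by simp
  finally show ?thesis by (simp add: sum_subtractf)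
qed

lemma sqrt_rate_arith:
  fixes T c0 S A l W :: real
  assumes "T > 0" "c0 > 0" "S \<le> A * sqrt T" "0 \<le> l" "l \<le> sqrt T" "0 \<le> W"
  shows "(2 * S + l * W) / (T * c0 / 2) \<le> 2 * (2 * A + W) / c0 * (1 / sqrt T)"
proof -
  define r where "r = sqrt T"
  have r: "r > 0" "T = r * r" unfolding r_def using assms by simp_all
  have "l * W \<le> r * W" using assms unfolding r_def by (intro mult_right_mono) auto
  then have "2 * S + l * W \<le> r * (2 * A + W)"
    using assms unfolding r_def by (simp add: algebra_simps)
  then have "(2 * S + l * W) / (T * c0 / 2) \<le> r * (2 * A + W) / (T * c0 / 2)"
    using assms by (intro divide_right_mono) auto
  also have "\<dots> = 2 * (2 * A + W) / c0 * (1 / r)"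
    unfolding r(2) using r assms by (simp add: field_simps)
  finally show ?thesis unfolding r_def .
qed

locale acix_estimators = acix M K q J s p idx Y X u \<theta>0
  for M :: "'a measure" and K q J s p and idx :: "'p::finite \<Rightarrow> nat" and Y X u \<theta>0 +
  fixes \<Theta> :: "(real ^ 'p) set" and lam :: "nat \<Rightarrow> real" and \<gamma> :: real
    and \<theta>tilde \<theta>hat :: "nat \<Rightarrow> 'a \<Rightarrow> real ^ 'p"
  assumes theta0_in: "\<theta>0 \<in> \<Theta>"
    and lam_pos: "\<And>T. lam T > 0"
    and gamma_pos: "\<gamma> > 0"
    and tilde_min: "\<And>T \<omega>. \<omega> \<in> space M \<Longrightarrow> \<theta>tilde T \<omega> \<in> \<Theta> \<and>
        (\<forall>\<theta>\<in>\<Theta>. DK_obj K Y (Zvec idx q J Y X) T \<omega> (\<theta>tilde T \<omega>) \<le> DK_obj K Y (Zvec idx q J Y X) T \<omega> \<theta>)"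
    and hat_min: "\<And>T \<omega>. \<omega> \<in> space M \<Longrightarrow>
        \<theta>hat T \<omega> \<in> adalasso_dom \<Theta> (\<theta>tilde T \<omega>) \<and>
        (\<forall>\<theta>\<in>adalasso_dom \<Theta> (\<theta>tilde T \<omega>).
           adalasso_obj K Y (Zvec idx q J Y X) (lam T) \<gamma> (\<theta>tilde T \<omega>) T \<omega> (\<theta>hat T \<omega>)
             \<le> adalasso_obj K Y (Zvec idx q J Y X) (lam T) \<gamma> (\<theta>tilde T \<omega>) T \<omega> \<theta>)"
begin

lemma tilde_dist_le:
  assumes \<omega>: "\<omega> \<in> space M" and a: "a > 0"
    and coercive: "\<And>x. a * (norm x)\<^sup>2 \<le> qform (hessian T \<omega>) x"
  shows "norm (\<theta>tilde T \<omega> - \<theta>0) \<le> 2 * norm (score T \<omega>) / a"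
proof -
  have "DK_obj K Y Z T \<omega> (\<theta>tilde T \<omega>) + 0 \<le> DK_obj K Y Z T \<omega> \<theta>0 + 0"
    using tilde_min[OF \<omega>, of T] theta0_in by simp
  from minimiser_dist_le[where L=0, OF DK_obj_eq[OF \<omega>] coercive a this] show ?thesis by simp
qed

lemma hat_dist_le:
  assumes \<omega>: "\<omega> \<in> space M" and a: "a > 0"
    and coercive: "\<And>x. a * (norm x)\<^sup>2 \<le> qform (hessian T \<omega>) x"
    and w: "w > 0" and big: "\<And>j. \<theta>0 $ j \<noteq> 0 \<Longrightarrow> w \<le> \<bar>\<theta>tilde T \<omega> $ j\<bar>"
  shows "norm (\<theta>hat T \<omega> - \<theta>0) \<le> (2 * norm (score T \<omega>) + lam T * (real CARD('p) / w powr \<gamma>)) / a"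
proof -
  define pen where "pen \<theta> = (\<Sum>j\<in>{j. \<theta>tilde T \<omega> $ j \<noteq> 0}. \<bar>\<theta> $ j\<bar> / \<bar>\<theta>tilde T \<omega> $ j\<bar> powr \<gamma>)" for \<theta>
  let ?c = "real CARD('p) / w powr \<gamma>"
  have "\<theta>0 $ j = 0" if "\<theta>tilde T \<omega> $ j = 0" for j
    using big[of j] w that by force
  then have "\<theta>0 \<in> adalasso_dom \<Theta> (\<theta>tilde T \<omega>)"
    using theta0_in unfolding adalasso_dom_def by blast
  then have obj: "DK_obj K Y Z T \<omega> (\<theta>hat T \<omega>) + lam T * pen (\<theta>hat T \<omega>) \<le> DK_obj K Y Z T \<omega> \<theta>0 + lam T * pen \<theta>0"
    using hat_min[OF \<omega>, of T] unfolding adalasso_obj_def pen_def by blast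
  have "- ?c * norm (\<theta>hat T \<omega> - \<theta>0) \<le> pen (\<theta>hat T \<omega>) - pen \<theta>0"
    unfolding pen_def using w gamma_pos big by (intro adaptive_penalty_diff_ge) auto
  then have "lam T * (- ?c * norm (\<theta>hat T \<omega> - \<theta>0)) \<le> lam T * (pen (\<theta>hat T \<omega>) - pen \<theta>0)"
    using lam_pos[of T] by (intro mult_left_mono) auto
  then have pen: "- (lam T * ?c) * norm (\<theta>hat T \<omega> - \<theta>0) \<le> lam T * pen (\<theta>hat T \<omega>) - lam T * pen \<theta>0"
    by (simp add: right_diff_distrib mult.assoc)
  have "0 \<le> lam T * ?c" using lam_pos[of T] by simp
  from minimiser_dist_le[OF DK_obj_eq[OF \<omega>] coercive a obj pen this] show ?thesis .
qed

text \<open>The unpenalised estimator first gets within m/2 of \<theta>0, which keeps the adaptive weights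
  of the nonzero coordinates of \<theta>0 bounded.\<close>

lemma hat_dist_le_on_good_event:
  assumes \<omega>: "\<omega> \<in> space M" and T: "T > 0" and c0: "c0 > 0"
    and coercive: "\<And>x. real T * c0 / 2 * (norm x)\<^sup>2 \<le> qform (hessian T \<omega>) x"
    and score: "norm (score T \<omega>) \<le> C * sqrt (real T)"
    and lam: "lam T \<le> sqrt (real T)"
    and m: "m > 0" "\<And>j. \<theta>0 $ j \<noteq> 0 \<Longrightarrow> m \<le> \<bar>\<theta>0 $ j\<bar>"
    and small: "4 * C / c0 * (1 / sqrt (real T)) < m / 2"
  shows "norm (\<theta>hat T \<omega> - \<theta>0) \<le> 2 * (2 * C + real CARD('p) / (m / 2) powr \<gamma>) / c0 * (1 / sqrt (real T))"
proof -
  have a: "real T * c0 / 2 > 0" using T c0 by simp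
  have "norm (\<theta>tilde T \<omega> - \<theta>0) \<le> (2 * norm (score T \<omega>) + 0 * 0) / (real T * c0 / 2)"
    using tilde_dist_le[OF \<omega> a coercive] by simp
  also have "\<dots> \<le> 2 * (2 * C + 0) / c0 * (1 / sqrt (real T))"
    using T c0 score by (intro sqrt_rate_arith) auto
  also have "\<dots> < m / 2" using small by simp
  finally have "norm (\<theta>tilde T \<omega> - \<theta>0) < m / 2" .
  then have "m / 2 \<le> \<bar>\<theta>tilde T \<omega> $ j\<bar>" if "\<theta>0 $ j \<noteq> 0" for j
    using m(2)[OF that] component_le_norm_cart[of "\<theta>tilde T \<omega> - \<theta>0" j] by simp
  then have "norm (\<theta>hat T \<omega> - \<theta>0)
      \<le> (2 * norm (score T \<omega>) + lam T * (real CARD('p) / (m / 2) powr \<gamma>)) / (real T * c0 / 2)"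
    using m(1) by (intro hat_dist_le[OF \<omega> a coercive]) auto
  also have "\<dots> \<le> 2 * (2 * C + real CARD('p) / (m / 2) powr \<gamma>) / c0 * (1 / sqrt (real T))"
    using T c0 score lam lam_pos[of T] by (intro sqrt_rate_arith) (auto intro: less_imp_le)
  finally show ?thesis .
qed

theorem estimator_rate:
  assumes gram_pd: "pos_def_mat (\<chi> i j. gram_mean i j)"
    and lam_rate: "(\<lambda>T. lam T / sqrt (real T)) \<longlonglongrightarrow> 0"
  shows "bigO_p M (\<lambda>T \<omega>. norm (\<theta>hat T \<omega> - \<theta>0)) (\<lambda>T. 1 / sqrt (real T))"
proof (rule bigO_pI)
  fix \<epsilon> :: real assume \<epsilon>: "\<epsilon> > 0"
  obtain c0 where c0: "c0 > 0" and coercive: "\<And>x. c0 * (norm x)\<^sup>2 \<le> qform gram_mean x"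
    using pos_def_mat_coercive[OF gram_pd] by auto
  obtain m where m: "m > 0" "\<And>j. \<theta>0 $ j \<noteq> 0 \<Longrightarrow> m \<le> \<bar>\<theta>0 $ j\<bar>"
    using nonzero_abs_lower_bound by blast
  define \<eta> where "\<eta> = c0 / (2 * real CARD('p) ^ 2)"
  obtain C where score_large:
    "\<And>T. T > 0 \<Longrightarrow> measure M {\<omega> \<in> space M. C * sqrt (real T) \<le> norm (score T \<omega>)} < \<epsilon> / 2"
    using score_bounded_in_probability[of "\<epsilon> / 2"] \<epsilon> by (metis half_gt_zero)
  define hess_far where "hess_far T =
    {\<omega> \<in> space M. \<exists>i j. real T * \<eta> \<le> \<bar>hessian T \<omega> i j - real T * gram_mean i j\<bar>}" for T
  define score_large where "score_large T = {\<omega> \<in> space M. C * sqrt (real T) \<le> norm (score T \<omega>)}" for T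
  have [measurable]: "hess_far T \<in> sets M" "score_large T \<in> sets M" for T
    unfolding hess_far_def score_large_def by measurable
  have "\<eta> > 0" unfolding \<eta>_def using c0 by simp
  then have "eventually (\<lambda>T. measure M (hess_far T) < \<epsilon> / 2) sequentially"
    unfolding hess_far_def using \<epsilon> by (intro order_tendstoD(2)[OF hessian_deviation_tendsto]) auto
  moreover have "eventually (\<lambda>T. lam T / sqrt (real T) < 1) sequentially"
    by (rule order_tendstoD(2)[OF lam_rate]) simp
  moreover have "(\<lambda>T. 4 * C / c0 * (1 / sqrt (real T))) \<longlonglongrightarrow> 0"
    by (intro tendsto_mult_right_zero tendsto_divide_0[OF tendsto_const]
        filterlim_at_top_imp_at_infinity filterlim_compose[OF sqrt_at_top filterlim_real_sequentially])
  then have "eventually (\<lambda>T. 4 * C / c0 * (1 / sqrt (real T)) < m / 2) sequentially"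
    using m(1) by (intro order_tendstoD(2)) auto
  ultimately have "eventually (\<lambda>T. measure M (hess_far T) < \<epsilon> / 2 \<and> lam T / sqrt (real T) < 1
      \<and> 4 * C / c0 * (1 / sqrt (real T)) < m / 2 \<and> T > 0) sequentially"
    using eventually_gt_at_top[of 0] by (intro eventually_conj)
  then obtain N where N: "\<And>T. T \<ge> N \<Longrightarrow> measure M (hess_far T) < \<epsilon> / 2 \<and> lam T / sqrt (real T) < 1
      \<and> 4 * C / c0 * (1 / sqrt (real T)) < m / 2 \<and> T > 0"
    unfolding eventually_sequentially by blast
  show "\<exists>Cf N. \<forall>T\<ge>N. \<exists>A\<in>sets M. measure M A < \<epsilon> \<and>
      (\<forall>\<omega>\<in>space M - A. \<bar>norm (\<theta>hat T \<omega> - \<theta>0)\<bar> \<le> Cf * (1 / sqrt (real T)))"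
  proof (intro exI allI impI bexI conjI ballI)
    fix T assume "T \<ge> N"
    note N = N[OF this]
    show "measure M (hess_far T \<union> score_large T) < \<epsilon>"
      using measure_Un_le[of "hess_far T" M "score_large T"] N score_large[of T]
      unfolding score_large_def by simp
    fix \<omega> assume \<omega>: "\<omega> \<in> space M - (hess_far T \<union> score_large T)"
    have "\<bar>hessian T \<omega> i j - real T * gram_mean i j\<bar> \<le> real T * \<eta>" for i j
      using \<omega> unfolding hess_far_def by (auto simp: not_le intro: less_imp_le)
    then have hess: "real T * c0 / 2 * (norm x)\<^sup>2 \<le> qform (hessian T \<omega>) x" for x
      using hessian_qform_ge[OF coercive] unfolding \<eta>_def by blast
    have "norm (score T \<omega>) \<le> C * sqrt (real T)" using \<omega> unfolding score_large_def by auto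
    moreover have "lam T \<le> sqrt (real T)" using N by (auto simp: divide_less_eq)
    ultimately have "norm (\<theta>hat T \<omega> - \<theta>0) \<le> 2 * (2 * C + real CARD('p) / (m / 2) powr \<gamma>) / c0 * (1 / sqrt (real T))"
      using \<omega> N by (intro hat_dist_le_on_good_event[OF _ _ c0 hess _ _ m]) auto
    then show "\<bar>norm (\<theta>hat T \<omega> - \<theta>0)\<bar> \<le> 2 * (2 * C + real CARD('p) / (m / 2) powr \<gamma>) / c0 * (1 / sqrt (real T))"
      by simp
  qed simp
qed

end

theorem theorem1:
  fixes M :: "'a measure"
    and K :: "real \<Rightarrow> real \<Rightarrow> real"
    and q J s p :: nat
    and idx :: "'p::finite \<Rightarrow> nat"
    and Y :: "int \<Rightarrow> 'a \<Rightarrow> interval"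
    and X :: "nat \<Rightarrow> int \<Rightarrow> 'a \<Rightarrow> interval"
    and u :: "int \<Rightarrow> 'a \<Rightarrow> interval"
    and \<theta>0 :: "real ^ 'p"
    and \<Theta> :: "(real ^ 'p) set"
    and \<sigma>2 :: real
    and lam :: "nat \<Rightarrow> real"
    and \<gamma> :: real
    and \<theta>tilde \<theta>hat :: "nat \<Rightarrow> 'a \<Rightarrow> real ^ 'p"
  defines "Z \<equiv> Zvec idx q J Y X"
  assumes prob: "prob_space M"
    and kernel: "spd_kernel K"
    and p_def: "p = 2 + q + J * (s + 1)"
    and idx: "bij_betw idx UNIV {..<p}"
    and Y_rv: "\<And>t. Y t \<in> borel_measurable M"
    and X_rv: "\<And>j t. 1 \<le> j \<Longrightarrow> j \<le> J \<Longrightarrow> X j t \<in> borel_measurable M"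
    and model: "\<And>t \<omega>. \<omega> \<in> space M \<Longrightarrow> Y t \<omega> = lincomb (Z t \<omega>) \<theta>0 + u t \<omega>"
    \<comment> \<open>(A1)\<close>
    and stat: "strictly_stationary M (joint_path J Y X)"
    and erg: "ergodic_proc M (joint_path J Y X)"
    and Y_mom: "\<And>t. integrable M (\<lambda>\<omega>. (normK K (Y t \<omega>)) ^ 4)"
    and X_mom: "\<And>j t. 1 \<le> j \<Longrightarrow> j \<le> J \<Longrightarrow> integrable M (\<lambda>\<omega>. (normK K (X j t \<omega>)) ^ 4)"
    and u_mds: "\<And>t v. v \<in> dirs \<Longrightarrow>
       AE \<omega> in M. real_cond_exp M (info M J Y X (t - 1)) (\<lambda>\<omega>. supp (u t \<omega>) v) \<omega> = 0"
    and u_var: "\<And>t.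
       AE \<omega> in M. real_cond_exp M (info M J Y X (t - 1)) (\<lambda>\<omega>. (normK K (u t \<omega>))\<^sup>2) \<omega> = \<sigma>2"
    \<comment> \<open>(A2)\<close>
    and Theta_compact: "compact \<Theta>"
    and theta0_int: "\<theta>0 \<in> interior \<Theta>"
    \<comment> \<open>(A3)\<close>
    and A3: "\<exists>e>0. \<forall>\<theta>\<in>ball \<theta>0 e. \<forall>t.
        pos_def_mat (\<chi> i j. integral\<^sup>L M (\<lambda>\<omega>. ipK K (Z t \<omega> $ i) (Z t \<omega> $ j))) \<and>
        pos_def_mat (\<chi> i j. integral\<^sup>L M (\<lambda>\<omega>.
            ipK K (Z t \<omega> $ i) (Y t \<omega> - lincomb (Z t \<omega>) \<theta>) *
            ipK K (Y t \<omega> - lincomb (Z t \<omega>) \<theta>) (Z t \<omega> $ j)))"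
    \<comment> \<open>(A4)\<close>
    and lam_pos: "\<And>T. lam T > 0"
    and gamma_pos: "\<gamma> > 0"
    and lam_rate1: "(\<lambda>T. lam T / sqrt (real T)) \<longlonglongrightarrow> 0"
    and lam_rate2: "filterlim (\<lambda>T. lam T * real T powr ((\<gamma> - 1) / 2)) at_top sequentially"
    \<comment> \<open>estimators\<close>
    and tilde_min: "\<And>T \<omega>. \<omega> \<in> space M \<Longrightarrow> \<theta>tilde T \<omega> \<in> \<Theta> \<and>
        (\<forall>\<theta>\<in>\<Theta>. DK_obj K Y Z T \<omega> (\<theta>tilde T \<omega>) \<le> DK_obj K Y Z T \<omega> \<theta>)"
    and hat_min: "\<And>T \<omega>. \<omega> \<in> space M \<Longrightarrow>
        \<theta>hat T \<omega> \<in> adalasso_dom \<Theta> (\<theta>tilde T \<omega>) \<and>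
        (\<forall>\<theta>\<in>adalasso_dom \<Theta> (\<theta>tilde T \<omega>).
           adalasso_obj K Y Z (lam T) \<gamma> (\<theta>tilde T \<omega>) T \<omega> (\<theta>hat T \<omega>)
             \<le> adalasso_obj K Y Z (lam T) \<gamma> (\<theta>tilde T \<omega>) T \<omega> \<theta>)"
    and hat_rv: "\<And>T. \<theta>hat T \<in> borel_measurable M"
  shows "bigO_p M (\<lambda>T \<omega>. norm (\<theta>hat T \<omega> - \<theta>0)) (\<lambda>T. 1 / sqrt (real T))"
proof -
  interpret acix_estimators M K q J s p idx Y X u \<theta>0 \<Theta> lam \<gamma> \<theta>tilde \<theta>hat
  proof (intro acix_estimators.intro acix.intro acix_estimators_axioms.intro)
    show "\<theta>0 \<in> \<Theta>" using theta0_int interior_subset by blast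
  qed (use prob kernel p_def idx Y_rv X_rv model stat erg Y_mom X_mom u_mds lam_pos gamma_pos
        tilde_min hat_min in \<open>simp_all add: Z_def\<close>)
  have "pos_def_mat (\<chi> i j. integral\<^sup>L M (\<lambda>\<omega>. ipK K (Z 0 \<omega> $ i) (Z 0 \<omega> $ j)))"
    using A3 centre_in_ball by blast
  then have "pos_def_mat (\<chi> i j. gram_mean i j)"
    unfolding gram_mean_def Z_def by simp
  then show ?thesis using lam_rate1 by (rule estimator_rate)
qed

end
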